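(* Let $N$ be a natural number and $\beta\in\mathbb{R}\setminus\mathbb{Q}$. If $A$ is a Fourier-uniform subset of $[N]$ with $|A|=\alpha N$, then $$\frac{1}{N^2}\sum_{x,d\in\mathbb{Z}}1_A(x)1_A(x+d)1_A([x+\beta d])=\frac{\alpha^3}{N^2}\sum_{x,d\in\mathbb{Z}}1_{[N]}(x)1_{[N]}(x+d)1_{[N]}([x+\beta d])+o_\beta(1).$$
   Context: $[N]=\{1,\dots,N\}$; for $\theta\in\mathbb{R}$, $[\theta]=\lfloor\theta+\tfrac12\rfloor$ is the nearest integer; $e(\theta)=e^{2\pi i\theta}$. For $A\subseteq[N]$ with $|A|=\alpha N$, the balanced function is $f_A=1_A-\alpha1_{[N]}$. A (sequence of) set(s) $A=A_N\subseteq[N]$ is Fourier-uniform if $\sup_{\theta\in[0,1]}|N^{-1}\sum_{n\leqslant N}f_A(n)e(n\theta)|=o(1)$ as $N\to\infty$. The $o_\beta(1)$ term tends to $0$ as $N\to\infty$ at a rate that may depend on $\beta$ (and on the rate in the Fourier-uniformity hypothesis). *)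

theory Defs
  imports "HOL-Analysis.Analysis"
begin

definition nint :: "real \<Rightarrow> int" where
  "nint \<theta> = \<lfloor>\<theta> + 1/2\<rfloor>"

definition e :: "real \<Rightarrow> complex" where
  "e \<theta> = exp (2 * of_real pi * \<i> * of_real \<theta>)"

definition dens :: "int set \<Rightarrow> nat \<Rightarrow> real" where
  "dens S N = real (card S) / real N"

definition balanced :: "int set \<Rightarrow> nat \<Rightarrow> int \<Rightarrow> real" where
  "balanced S N n = indicator S n - dens S N * indicator {1..int N} n"

definition fourier_uniform :: "(nat \<Rightarrow> int set) \<Rightarrow> bool" where
  "fourier_uniform A \<longleftrightarrow>
     ((\<lambda>N. SUP \<theta>\<in>{0..1::real}.
         norm ((1 / of_nat N) * (\<Sum>n\<in>{1..int N}. of_real (balanced (A N) N n) * e (of_int n * \<theta>))))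
      \<longlonglongrightarrow> 0)"

definition trip :: "int set \<Rightarrow> real \<Rightarrow> real" where
  "trip S \<beta> = (\<Sum>\<^sub>\<infinity>(x,d)\<in>(UNIV :: (int \<times> int) set).
      indicator S x * indicator S (x + d) * indicator S (nint (of_int x + \<beta> * of_int d)))"

end

theory Submission
  imports Defs
begin

text \<open>Substituting \<open>y = x + d\<close> writes the count as the sum of \<open>1_A(x) 1_A(y) 1_A(z)\<close> over
  \<open>z = [x + \<beta> (y - x)]\<close>, and writing \<open>1_A = f_A + \<alpha> 1_[N]\<close> turns the difference in question into
  three trilinear sums, each containing the balanced function \<open>f_A\<close> once.  In each of them the
  rounding condition is replaced by a Fejer-smoothed one: the smoothed sum is an average of
  products of three exponential sums, so it is at most \<open>N sup |f_A^| \<cdot> O(N) = o(N\<^sup>2)\<close>.  The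
  smoothing costs \<open>O(1/(P \<delta>))\<close> per pair \<open>(x, y)\<close> unless \<open>\<beta> (y - x)\<close> lies within \<open>\<delta>\<close> of a
  half-integer; as \<open>\<beta>\<close> is irrational, two such differences are far apart once \<open>\<delta>\<close> is small,
  so they have density \<open>o(1)\<close>.\<close>

section \<open>The Fejer kernel\<close>

lemma e_add: "e (a + b) = e a * e b"
  unfolding e_def by (simp add: distrib_left exp_add)

lemma e_zero[simp]: "e 0 = 1" unfolding e_def by simp

lemma norm_e[simp]: "norm (e a) = 1"
  unfolding e_def by (simp add: norm_exp_eq_Re)

lemma cnj_e: "cnj (e a) = e (- a)"
  unfolding e_def by (simp add: exp_cnj)

lemma e_diff: "e (a - b) = e a * cnj (e b)"
  using e_add[of a "-b"] by (simp add: cnj_e)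

lemma e_of_int: "e (of_int n) = 1"
proof -
  have "e (of_int n) = exp ((2 * (of_int n :: complex) * pi) * \<i>)"
    unfolding e_def by (simp add: algebra_simps)
  also have "\<dots> = 1" using exp_integer_2pi[of "of_int n"] by simp
  finally show ?thesis .
qed

lemma e_of_nat_mult: "e (real j * u) = e u ^ j"
  unfolding e_def by (simp add: exp_of_nat_mult[symmetric] algebra_simps)

definition exp_sum :: "nat \<Rightarrow> real \<Rightarrow> complex" where
  "exp_sum K u = (\<Sum>j<K. e (real j * u))"

text \<open>An \<open>L\<close>-periodic Fejer kernel of width about \<open>1 / P\<close> and height \<open>P\<close>, whose frequencies are the
  multiples \<open>k / L\<close>, \<open>|k| < L P\<close>.\<close>
definition fejer :: "nat \<Rightarrow> nat \<Rightarrow> real \<Rightarrow> real" where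
  "fejer L P s = (cmod (exp_sum (L*P) (s / real L)))^2 / (real L * real (L*P))"

lemma fejer_nonneg: "fejer L P s \<ge> 0"
  unfolding fejer_def by simp

lemma exp_sum_minus: "exp_sum K (- u) = cnj (exp_sum K u)"
  unfolding exp_sum_def by (simp add: cnj_e)

lemma fejer_minus: "fejer L P (- s) = fejer L P s"
  unfolding fejer_def by (simp add: exp_sum_minus)

lemma norm_exp_sum_le: "cmod (exp_sum K u) \<le> K"
proof -
  have "cmod (exp_sum K u) \<le> (\<Sum>j<K. cmod (e (real j * u)))"
    unfolding exp_sum_def by (rule norm_sum)
  also have "\<dots> = K" by simp
  finally show ?thesis .
qed

lemma fejer_le: assumes "L > 0" "P > 0" shows "fejer L P s \<le> P"
proof -
  have "(cmod (exp_sum (L*P) (s / real L)))^2 \<le> (real (L*P))^2"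
    using norm_exp_sum_le[of "L*P" "s / real L"] by (intro power_mono) auto
  hence "fejer L P s \<le> (real (L*P))^2 / (real L * real (L*P))"
    unfolding fejer_def using assms by (intro divide_right_mono) auto
  also have "\<dots> = P" using assms by (simp add: power2_eq_square field_simps)
  finally show ?thesis .
qed

lemma sin_ge_linear: assumes "0 \<le> x" "x \<le> pi/2" shows "sin x \<ge> 5/12 * x"
proof -
  have mac: "sin y \<ge> y - y^3/6" if "y \<ge> 0" for y :: real
  proof -
    have b: "\<bar>sin y - (\<Sum>m<3. sin_coeff m * y ^ m)\<bar> \<le> inverse (fact 3) * \<bar>y\<bar> ^ 3"
      by (rule Maclaurin_sin_bound)
    have s3: "(\<Sum>m<3. sin_coeff m * y ^ m) = y"
      by (simp add: numeral_3_eq_3 sin_coeff_def lessThan_Suc)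
    have f3: "inverse (fact 3 :: real) = 1/6" by (simp add: fact_numeral)
    from b have "\<bar>sin y - y\<bar> \<le> 1/6 * y ^ 3" unfolding s3 f3 using that by simp
    moreover have "y - sin y \<le> \<bar>sin y - y\<bar>" by linarith
    ultimately show ?thesis by linarith
  qed
  show ?thesis
  proof (cases "x \<le> 1")
    case True
    have "x*x \<le> 1" using True assms(1) by (simp add: mult_le_one)
    hence "x * (x * x) \<le> x * 1" using assms(1) by (intro mult_left_mono) auto
    hence "x^3 \<le> x" by (simp add: power3_eq_cube mult.assoc)
    hence "x^3/6 \<le> x/6" by simp
    then show ?thesis using mac[OF assms(1)] assms(1) by linarith
  next
    case False
    have "sin 1 \<le> sin x"
      using False assms pi_ge_two by (subst sin_mono_le_eq) auto
    moreover have "sin (1::real) \<ge> 5/6" using mac[of 1] by simp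
    moreover have "x \<le> 2" using assms pi_less_4 by linarith
    ultimately show ?thesis by linarith
  qed
qed

lemma abs_sin_pi_ge: assumes "\<bar>u\<bar> \<le> 1/2" shows "\<bar>sin (pi * u)\<bar> \<ge> \<bar>u\<bar> / 2"
proof -
  have "sin (pi * \<bar>u\<bar>) \<ge> 5/12 * (pi * \<bar>u\<bar>)"
    using assms by (intro sin_ge_linear) (auto simp: mult_left_le)
  moreover have "5/12 * (pi * \<bar>u\<bar>) \<ge> \<bar>u\<bar> / 2"
    using pi_ge_two mult_right_mono[of 2 pi "\<bar>u\<bar>"] by simp
  moreover have "\<bar>sin (pi * u)\<bar> = sin (pi * \<bar>u\<bar>)"
  proof (cases "u \<ge> 0")
    case True
    have "sin (pi * u) \<ge> 0" using True assms by (auto intro!: sin_ge_zero simp: mult_left_le)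
    then show ?thesis using True by simp
  next
    case False
    then have "sin (pi * u) = - sin (pi * \<bar>u\<bar>)" by simp
    moreover have "sin (pi * \<bar>u\<bar>) \<ge> 0" using assms by (auto intro!: sin_ge_zero simp: mult_left_le)
    ultimately show ?thesis by simp
  qed
  ultimately show ?thesis by linarith
qed

lemma norm_one_minus_e: "cmod (1 - e u) = 2 * \<bar>sin (pi * u)\<bar>"
proof -
  have eu: "e u = cis (2 * pi * u)" unfolding e_def by (simp add: cis_conv_exp mult.commute mult.left_commute)
  have "(cmod (1 - e u))^2 = (1 - cos (2*pi*u))^2 + (sin (2*pi*u))^2"
    unfolding eu by (simp add: cmod_power2)
  also have "\<dots> = 2 - 2 * cos (2*pi*u)"
    using sin_cos_squared_add[of "2*pi*u"] by (simp add: power2_eq_square algebra_simps)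
  also have "\<dots> = 4 * (sin (pi*u))^2"
    using cos_double_sin[of "pi*u"] by (simp add: algebra_simps)
  also have "\<dots> = (2 * \<bar>sin (pi * u)\<bar>)^2" by (simp add: power2_eq_square)
  finally show ?thesis
    by (metis abs_of_nonneg norm_ge_zero power2_eq_imp_eq zero_le_mult_iff abs_ge_zero zero_le_numeral)
qed

lemma norm_exp_sum_le_inverse: assumes "0 < \<bar>u\<bar>" "\<bar>u\<bar> \<le> 1/2" shows "cmod (exp_sum K u) \<le> 2 / \<bar>u\<bar>"
proof -
  let ?z = "e u"
  have nz: "cmod (1 - ?z) \<ge> \<bar>u\<bar>"
    using norm_one_minus_e[of u] abs_sin_pi_ge[OF assms(2)] by linarith
  hence z1: "?z \<noteq> 1" using assms by auto
  have "exp_sum K u = (\<Sum>j<K. ?z ^ j)" unfolding exp_sum_def by (simp add: e_of_nat_mult)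
  also have "\<dots> = (1 - ?z^K) / (1 - ?z)" using z1 by (simp add: sum_gp_strict)
  finally have "cmod (exp_sum K u) = cmod (1 - ?z^K) / cmod (1 - ?z)" by (simp add: norm_divide)
  also have "\<dots> \<le> 2 / cmod (1 - ?z)"
  proof (intro divide_right_mono)
    have "cmod (1 - ?z^K) \<le> cmod 1 + cmod (?z^K)" by (rule norm_triangle_ineq4)
    also have "\<dots> = 2" by (simp add: norm_power)
    finally show "cmod (1 - ?z^K) \<le> 2" .
  qed simp
  also have "\<dots> \<le> 2 / \<bar>u\<bar>" using nz assms by (intro divide_left_mono) (auto intro!: mult_pos_pos)
  finally show ?thesis .
qed

lemma fejer_decay:
  assumes "L > 0" "P > 0" "0 < \<bar>s\<bar>" "\<bar>s\<bar> \<le> real L / 2"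
  shows "fejer L P s \<le> 4 / (real P * s^2)"
proof -
  have u1: "0 < \<bar>s / real L\<bar>" "\<bar>s / real L\<bar> \<le> 1/2" using assms by (auto simp: field_simps)
  have "cmod (exp_sum (L*P) (s / real L)) \<le> 2 / \<bar>s / real L\<bar>" by (rule norm_exp_sum_le_inverse[OF u1])
  also have "\<dots> = 2 * real L / \<bar>s\<bar>" using assms by (simp add: field_simps)
  finally have g: "cmod (exp_sum (L*P) (s / real L)) \<le> 2 * real L / \<bar>s\<bar>" .
  have "(cmod (exp_sum (L*P) (s / real L)))^2 \<le> (2 * real L / \<bar>s\<bar>)^2"
    using g by (intro power_mono) auto
  hence "fejer L P s \<le> (2 * real L / \<bar>s\<bar>)^2 / (real L * real (L*P))"
    unfolding fejer_def using assms by (intro divide_right_mono) auto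
  also have "\<dots> = 4 / (real P * s^2)" using assms by (simp add: power2_eq_square field_simps)
  finally show ?thesis .
qed

lemma e_eq_1_imp_int: assumes "e u = 1" shows "\<exists>i::int. u = of_int i"
proof -
  have "sin (pi * u) = 0" using norm_one_minus_e[of u] assms by simp
  then obtain i :: int where "pi * u = of_int i * pi" using sin_zero_iff_int2 by blast
  then show ?thesis by auto
qed

lemma sum_e_roots_of_unity:
  fixes m :: int and K :: nat
  assumes "m \<noteq> 0" "\<bar>m\<bar> < int K"
  shows "(\<Sum>i<K. e (of_int m * real i / real K)) = 0"
proof -
  let ?w = "e (of_int m / real K)"
  have K0: "K > 0" using assms by auto
  have w1: "?w \<noteq> 1"
  proof
    assume "?w = 1"
    then obtain i :: int where i: "of_int m / real K = of_int i" using e_eq_1_imp_int by blast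
    hence "of_int m = of_int i * real K" using K0 by (simp add: field_simps)
    hence mi: "m = i * int K" by (metis of_int_eq_iff of_int_mult of_int_of_nat_eq)
    have "i \<noteq> 0" using mi assms by auto
    hence "\<bar>i\<bar> \<ge> 1" by auto
    hence "\<bar>i\<bar> * int K \<ge> 1 * int K" by (intro mult_right_mono) auto
    hence "\<bar>m\<bar> \<ge> int K" unfolding mi abs_mult by simp
    thus False using assms by simp
  qed
  have wK: "?w ^ K = 1"
  proof -
    have "?w ^ K = e (real K * (of_int m / real K))" by (rule e_of_nat_mult[symmetric])
    also have "\<dots> = e (of_int m)" using K0 by simp
    finally show ?thesis by (simp add: e_of_int)
  qed
  have "(\<Sum>i<K. e (of_int m * real i / real K)) = (\<Sum>i<K. ?w ^ i)"
    by (intro sum.cong refl) (simp add: e_of_nat_mult[symmetric] mult.commute)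
  also have "\<dots> = 0" using w1 wK by (simp add: sum_gp_strict)
  finally show ?thesis .
qed

lemma sum_e_roots_of_unity_orthogonal:
  assumes "j < K" "j' < K"
  shows "(\<Sum>i<K. e ((real j' - real j) * real i / real K)) = (if j = j' then of_nat K else 0)"
proof (cases "j = j'")
  case True then show ?thesis by simp
next
  case False
  have "(\<Sum>i<K. e ((real j' - real j) * real i / real K)) = (\<Sum>i<K. e (of_int (int j' - int j) * real i / real K))"
    by simp
  also have "\<dots> = 0" using assms False by (intro sum_e_roots_of_unity) auto
  finally show ?thesis using False by simp
qed

lemma fejer_expansion:
  assumes "L > 0" "P > 0"
  shows "complex_of_real (fejer L P s) =
    (1 / (real L * real (L*P))) * (\<Sum>j<L*P. \<Sum>j'<L*P. e ((real j - real j') * (s / real L)))"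
proof -
  let ?K = "L*P" and ?u = "s / real L"
  have "complex_of_real ((cmod (exp_sum ?K ?u))^2) = exp_sum ?K ?u * cnj (exp_sum ?K ?u)" by (rule complex_norm_square)
  also have "\<dots> = (\<Sum>j<?K. e (real j * ?u)) * (\<Sum>j'<?K. e (- (real j' * ?u)))"
    unfolding exp_sum_def by (simp add: cnj_e)
  also have "\<dots> = (\<Sum>j<?K. \<Sum>j'<?K. e (real j * ?u) * e (- (real j' * ?u)))"
    by (simp add: sum_product)
  also have "\<dots> = (\<Sum>j<?K. \<Sum>j'<?K. e ((real j - real j') * ?u))"
    by (intro sum.cong refl) (simp add: e_add[symmetric] algebra_simps)
  finally have *: "complex_of_real ((cmod (exp_sum ?K ?u))^2) = (\<Sum>j<?K. \<Sum>j'<?K. e ((real j - real j') * ?u))" .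
  show ?thesis unfolding fejer_def using * by (simp add: divide_inverse mult.commute)
qed

text \<open>Expanding the kernel, orthogonality of the \<open>L P\<close>-th roots of unity leaves only the diagonal.\<close>
lemma fejer_shifts_sum:
  assumes "L > 0" "P > 0"
  shows "(1 / real P) * (\<Sum>i<L*P. fejer L P (s - (of_int a + real i) / real P)) = 1"
proof -
  define K where "K = L*P"
  have K0: "K > 0" using assms by (simp add: K_def)
  have rK: "real K = real L * real P" by (simp add: K_def)
  define A where "A j j' = e ((real j - real j') * (s / real L) - (real j - real j') * of_int a / real K)" for j j' :: nat
  have split: "e ((real j - real j') * ((s - (of_int a + real i) / real P) / real L))
      = A j j' * e ((real j' - real j) * real i / real K)" for i j j' :: nat
  proof -
    have "(real j - real j') * ((s - (of_int a + real i) / real P) / real L)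
       = ((real j - real j') * (s / real L) - (real j - real j') * of_int a / real K) + (real j' - real j) * real i / real K"
      using assms unfolding rK by (simp add: field_simps)
    then show ?thesis unfolding A_def by (simp add: e_add)
  qed
  have "complex_of_real (\<Sum>i<K. fejer L P (s - (of_int a + real i) / real P))
      = (\<Sum>i<K. (1 / (real L * real K)) * (\<Sum>j<K. \<Sum>j'<K. e ((real j - real j') * ((s - (of_int a + real i) / real P) / real L))))"
    unfolding K_def of_real_sum using fejer_expansion[OF assms] by simp
  also have "\<dots> = (\<Sum>i<K. (1 / (real L * real K)) * (\<Sum>j<K. \<Sum>j'<K. A j j' * e ((real j' - real j) * real i / real K)))"
    by (intro sum.cong refl) (simp only: split)
  also have "\<dots> = (1 / (real L * real K)) * (\<Sum>i<K. \<Sum>j<K. \<Sum>j'<K. A j j' * e ((real j' - real j) * real i / real K))"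
    by (simp only: sum_distrib_left)
  also have "(\<Sum>i<K. \<Sum>j<K. \<Sum>j'<K. A j j' * e ((real j' - real j) * real i / real K))
       = (\<Sum>j<K. \<Sum>j'<K. \<Sum>i<K. A j j' * e ((real j' - real j) * real i / real K))"
    by (rule trans[OF sum.swap]) (rule sum.cong[OF refl], rule sum.swap)
  also have "\<dots> = (\<Sum>j<K. \<Sum>j'<K. A j j' * (if j = j' then of_nat K else 0))"
    by (intro sum.cong refl) (simp add: sum_distrib_left[symmetric] sum_e_roots_of_unity_orthogonal)
  also have "\<dots> = (\<Sum>j<K. A j j * of_nat K)"
    by (intro sum.cong refl) (simp add: if_distrib cong: if_cong)
  also have "\<dots> = of_nat K * of_nat K" by (simp add: A_def)
  finally have "complex_of_real (\<Sum>i<K. fejer L P (s - (of_int a + real i) / real P))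
      = complex_of_real (real P)"
    using assms K0 unfolding rK by (simp add: field_simps K_def)
  hence "(\<Sum>i<K. fejer L P (s - (of_int a + real i) / real P)) = real P"
    using of_real_eq_iff by blast
  then show ?thesis using assms by (simp add: K_def)
qed

section \<open>Tails of the Fejer kernel\<close>

lemma inverse_square_le_telescoping:
  fixes \<rho> q u :: real
  assumes "\<rho> > 0" "q > 0" "u \<ge> \<rho>"
  shows "1 / u^2 \<le> ((1 + q/\<rho>)/q) * (1/u - 1/(u+q))"
proof -
  have u0: "u > 0" using assms by linarith
  have "1/u - 1/(u+q) = q / (u*(u+q))" using u0 assms by (simp add: field_simps)
  hence r: "((1 + q/\<rho>)/q) * (1/u - 1/(u+q)) = (1 + q/\<rho>) / (u*(u+q))" using assms by simp
  have "u/\<rho> \<ge> 1" using assms by simp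
  hence "q * 1 \<le> q * (u/\<rho>)" using assms by (intro mult_left_mono) auto
  hence "q * u \<le> (q * (u/\<rho>)) * u" using u0 by (intro mult_right_mono) auto
  moreover have "(1 + q/\<rho>) * u^2 = u*u + (q * (u/\<rho>)) * u" by (simp add: power2_eq_square algebra_simps)
  ultimately have "u*(u+q) \<le> (1 + q/\<rho>) * u^2" by (simp add: algebra_simps)
  moreover have c0: "1 + q/\<rho> > 0" using assms by (simp add: add_pos_nonneg)
  ultimately have "(1 + q/\<rho>) / ((1 + q/\<rho>) * u^2) \<le> (1 + q/\<rho>) / (u*(u+q))"
    using u0 assms by (intro frac_le) auto
  hence "1 / u^2 \<le> (1 + q/\<rho>) / (u*(u+q))" using c0 by simp
  thus ?thesis using r by simp
qed

lemma sum_inverse_square_progression_le: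
  fixes q \<rho> u :: real
  assumes "q > 0" "\<rho> > 0" "u \<ge> \<rho>"
  shows "(\<Sum>i<n. 1 / (u + real i * q)^2) \<le> (1 + q/\<rho>)/(q*\<rho>)"
proof -
  have "(\<Sum>i<n. 1 / (u + real i * q)^2) \<le> (\<Sum>i<n. ((1 + q/\<rho>)/q) * (1/(u + real i * q) - 1/(u + real (Suc i) * q)))"
  proof (rule sum_mono)
    fix i
    have "u + real i * q \<ge> \<rho>" using assms by (simp add: add_increasing2)
    from inverse_square_le_telescoping[OF assms(2,1) this]
    show "1 / (u + real i * q)^2 \<le> ((1 + q/\<rho>)/q) * (1/(u + real i * q) - 1/(u + real (Suc i) * q))"
      by (simp add: algebra_simps)
  qed
  also have "\<dots> = ((1 + q/\<rho>)/q) * (\<Sum>i<n. 1/(u + real i * q) - 1/(u + real (Suc i) * q))"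
    by (rule sum_distrib_left[symmetric])
  also have "(\<Sum>i<n. 1/(u + real i * q) - 1/(u + real (Suc i) * q)) = 1/u - 1/(u + real n * q)"
    using sum_lessThan_telescope'[of "\<lambda>i. 1/(u + real i * q)" n] by simp
  also have "((1 + q/\<rho>)/q) * (1/u - 1/(u + real n * q)) \<le> ((1 + q/\<rho>)/q) * (1/\<rho>)"
  proof (rule mult_left_mono)
    have "1/u \<le> 1/\<rho>" "0 \<le> 1/(u + real n * q)" using assms by (simp_all add: frac_le)
    thus "1/u - 1/(u + real n * q) \<le> 1/\<rho>" by linarith
  qed (use assms in simp)
  finally show ?thesis by simp
qed

lemma sum_inverse_square_one_sided:
  fixes J :: "int set" and q \<rho> r :: real
  assumes "finite J" "q > 0" "\<rho> > 0" "\<And>j. j \<in> J \<Longrightarrow> r - of_int j * q \<ge> \<rho>"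
  shows "(\<Sum>j\<in>J. 1 / (r - of_int j * q)^2) \<le> (1 + q/\<rho>)/(q*\<rho>)"
proof (cases "J = {}")
  case True
  then show ?thesis using assms by simp
next
  case False
  define m where "m = Max J"
  define u where "u = r - of_int m * q"
  have jm: "j \<le> m" if "j \<in> J" for j using that assms by (simp add: m_def)
  have u: "u \<ge> \<rho>" using assms(4)[of m] False assms(1) by (simp add: m_def u_def)
  have inj: "inj_on (\<lambda>j. nat (m - j)) J"
  proof (rule inj_onI)
    fix x y assume "x \<in> J" "y \<in> J" "nat (m - x) = nat (m - y)"
    thus "x = y" using jm[of x] jm[of y] by simp
  qed
  have "(\<Sum>j\<in>J. 1 / (r - of_int j * q)^2) = (\<Sum>j\<in>J. 1 / (u + real (nat (m - j)) * q)^2)"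
    by (intro sum.cong refl) (simp add: jm u_def algebra_simps)
  also have "\<dots> = (\<Sum>i\<in>(\<lambda>j. nat (m - j)) ` J. 1 / (u + real i * q)^2)"
    by (simp add: sum.reindex[OF inj])
  also have "\<dots> \<le> (\<Sum>i<Suc (nat (m - Min J)). 1 / (u + real i * q)^2)"
  proof (rule sum_mono2)
    show "(\<lambda>j. nat (m - j)) ` J \<subseteq> {..<Suc (nat (m - Min J))}"
    proof
      fix i assume "i \<in> (\<lambda>j. nat (m - j)) ` J"
      then obtain j where "j \<in> J" "i = nat (m - j)" by blast
      moreover have "Min J \<le> j" using \<open>j \<in> J\<close> assms(1) by simp
      ultimately show "i \<in> {..<Suc (nat (m - Min J))}" by simp
    qed
  qed auto
  also have "\<dots> \<le> (1 + q/\<rho>)/(q*\<rho>)"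
    by (rule sum_inverse_square_progression_le[OF assms(2,3) u])
  finally show ?thesis .
qed

lemma sum_inverse_square_separated:
  fixes J :: "int set" and q \<rho> r :: real
  assumes "finite J" "q > 0" "\<rho> > 0" "\<And>j. j \<in> J \<Longrightarrow> \<bar>r - of_int j * q\<bar> \<ge> \<rho>"
  shows "(\<Sum>j\<in>J. 1 / (r - of_int j * q)^2) \<le> 2 * ((1 + q/\<rho>)/(q*\<rho>))"
proof -
  define J1 where "J1 = {j\<in>J. r - of_int j * q > 0}"
  define J2 where "J2 = {j\<in>J. \<not> r - of_int j * q > 0}"
  have fin: "finite J1" "finite J2" using assms by (auto simp: J1_def J2_def)
  have "(\<Sum>j\<in>J. 1 / (r - of_int j * q)^2) = (\<Sum>j\<in>J1. 1 / (r - of_int j * q)^2) + (\<Sum>j\<in>J2. 1 / (r - of_int j * q)^2)"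
  proof -
    have "J = J1 \<union> J2" "J1 \<inter> J2 = {}" unfolding J1_def J2_def by auto
    thus ?thesis using sum.union_disjoint[OF fin] by simp
  qed
  also have "(\<Sum>j\<in>J1. 1 / (r - of_int j * q)^2) \<le> (1 + q/\<rho>)/(q*\<rho>)"
    by (rule sum_inverse_square_one_sided[OF fin(1) assms(2,3)]) (use assms(4) in \<open>fastforce simp: J1_def\<close>)
  also have "(\<Sum>j\<in>J2. 1 / (r - of_int j * q)^2) = (\<Sum>j\<in>uminus ` J2. 1 / ((-r) - of_int j * q)^2)"
    by (subst sum.reindex) (auto simp: inj_on_def power2_eq_square algebra_simps)
  also have "\<dots> \<le> (1 + q/\<rho>)/(q*\<rho>)"
    by (rule sum_inverse_square_one_sided) (use fin assms in \<open>fastforce simp: J2_def\<close>)+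
  finally show ?thesis by (simp add: mult_ac)
qed

lemma fejer_sum_separated:
  fixes J :: "int set" and q \<rho> r :: real
  assumes "finite J" "L > 0" "P > 0" "q > 0" "\<rho> > 0"
    and J: "\<And>j. j \<in> J \<Longrightarrow> \<rho> \<le> \<bar>r - of_int j * q\<bar> \<and> \<bar>r - of_int j * q\<bar> \<le> real L / 2"
  shows "(\<Sum>j\<in>J. fejer L P (r - of_int j * q)) \<le> 8 * (1 + q / \<rho>) / (real P * q * \<rho>)"
proof -
  have "(\<Sum>j\<in>J. fejer L P (r - of_int j * q)) \<le> (\<Sum>j\<in>J. (4 / real P) * (1 / (r - of_int j * q)^2))"
  proof (rule sum_mono)
    fix j assume j: "j \<in> J"
    have "0 < \<bar>r - of_int j * q\<bar>" using J[OF j] assms(5) by linarith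
    thus "fejer L P (r - of_int j * q) \<le> (4 / real P) * (1 / (r - of_int j * q)^2)"
      using fejer_decay[OF assms(2,3)] J[OF j] by simp
  qed
  also have "\<dots> = (4 / real P) * (\<Sum>j\<in>J. 1 / (r - of_int j * q)^2)"
    by (simp add: sum_distrib_left)
  also have "\<dots> \<le> (4 / real P) * (2 * ((1 + q / \<rho>) / (q * \<rho>)))"
    using J by (intro mult_left_mono sum_inverse_square_separated) (use assms in auto)
  finally show ?thesis by (simp add: field_simps)
qed

lemma fejer_tail_sum:
  fixes J :: "int set" and \<rho> r :: real
  assumes "finite J" "L > 0" "P > 0" "\<rho> > 0" "1 / real P \<le> \<rho>"
    and "\<And>j. j \<in> J \<Longrightarrow> \<rho> \<le> \<bar>r - of_int j / real P\<bar> \<and> \<bar>r - of_int j / real P\<bar> \<le> real L / 2"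
  shows "(1 / real P) * (\<Sum>j\<in>J. fejer L P (r - of_int j / real P)) \<le> 16 / (real P * \<rho>)"
proof -
  have "(\<Sum>j\<in>J. fejer L P (r - of_int j / real P)) \<le> 8 * (1 + (1 / real P) / \<rho>) / (real P * (1 / real P) * \<rho>)"
    using fejer_sum_separated[of J L P "1 / real P" \<rho> r] assms by simp
  also have "\<dots> \<le> 16 / \<rho>"
    using assms by (simp add: field_simps)
  finally show ?thesis using assms(3) by (simp add: divide_le_eq field_simps)
qed

section \<open>Smoothing the rounding function\<close>

definition box :: "real \<Rightarrow> real" where
  "box s = (if -1/2 \<le> s \<and> s < 1/2 then 1 else 0)"

lemma abs_add_ge_diff: fixes a b :: "'a::linordered_idom" shows "\<bar>b\<bar> - \<bar>a\<bar> \<le> \<bar>a + b\<bar>"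
  using abs_triangle_ineq2[of b "- a"] by simp

lemma nint_add_int: "nint (of_int x + t) = x + nint t"
proof -
  have "\<lfloor>of_int x + t + 1/2\<rfloor> = \<lfloor>(t + 1/2) + of_int x\<rfloor>" by (simp add: ac_simps)
  also have "\<dots> = \<lfloor>t + 1/2\<rfloor> + x" by (rule floor_add_int[symmetric])
  finally show ?thesis unfolding nint_def by simp
qed

lemma nint_bounds: "-1/2 \<le> t - of_int (nint t)" "t - of_int (nint t) < 1/2"
proof -
  have "of_int \<lfloor>t + 1/2\<rfloor> \<le> t + 1/2" "t + 1/2 < of_int \<lfloor>t + 1/2\<rfloor> + 1"
    by (rule of_int_floor_le, rule real_of_int_floor_add_one_gt)
  thus "-1/2 \<le> t - of_int (nint t)" "t - of_int (nint t) < 1/2" unfolding nint_def by linarith+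
qed

lemma nint_nearest: "\<bar>t - of_int (nint t)\<bar> \<le> \<bar>t - of_int m\<bar>"
proof (cases "m = nint t")
  case False
  have b: "-1/2 \<le> t - of_int (nint t)" "t - of_int (nint t) < 1/2" by (rule nint_bounds)+
  have "\<bar>of_int m - of_int (nint t)\<bar> \<ge> (1::real)" using False by (simp flip: of_int_diff)
  thus ?thesis using b by linarith
qed simp

lemma box_diff_of_int: "box (t - of_int z) = (if z = nint t then 1 else 0)"
proof -
  have "(-1/2 \<le> t - of_int z \<and> t - of_int z < 1/2) \<longleftrightarrow> (of_int z \<le> t + 1/2 \<and> t + 1/2 < of_int z + 1)"
    by linarith
  also have "\<dots> \<longleftrightarrow> nint t = z" unfolding nint_def by (simp only: floor_eq_iff)
  finally show ?thesis unfolding box_def by auto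
qed

definition central_block :: "nat \<Rightarrow> int set" where
  "central_block P = {j. - int P \<le> 2*j \<and> 2*j < int P}"

text \<open>Averaging the kernel over the \<open>P\<close> points \<open>j / P\<close> of \<open>[-1/2, 1/2)\<close> gives a smooth version of \<open>box\<close>
  with values in \<open>[0, 1]\<close>, because the \<open>L P\<close> shifts of a full period average to \<open>1\<close>.\<close>
definition smooth_box :: "nat \<Rightarrow> nat \<Rightarrow> real \<Rightarrow> real" where
  "smooth_box L P s = (1 / real P) * (\<Sum>j\<in>central_block P. fejer L P (s - of_int j / real P))"

lemma central_block_subset: "central_block P \<subseteq> {- int P..int P}"
  unfolding central_block_def by auto

lemma finite_central_block[simp]: "finite (central_block P)"
  using central_block_subset finite_subset by blast

lemma card_central_block_le: "card (central_block P) \<le> 2 * P + 1"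
proof -
  have "card (central_block P) \<le> card {- int P..int P}" by (rule card_mono) (auto simp: central_block_subset)
  thus ?thesis by simp
qed

lemma central_block_iff:
  assumes "P > 0"
  shows "j \<in> central_block P \<longleftrightarrow> -1/2 \<le> of_int j / real P \<and> of_int j / real P < 1/2"
proof -
  have "j \<in> central_block P \<longleftrightarrow> - real P \<le> 2 * of_int j \<and> 2 * of_int j < real P"
    unfolding central_block_def mem_Collect_eq
    by (metis of_int_le_iff of_int_less_iff of_int_minus of_int_mult of_int_numeral of_int_of_nat_eq)
  thus ?thesis using assms by (simp add: field_simps)
qed

lemma abs_central_block_le: "j \<in> central_block P \<Longrightarrow> P > 0 \<Longrightarrow> \<bar>of_int j / real P\<bar> \<le> 1/2"
  using central_block_iff[of P j] by (simp only: abs_le_iff) linarith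

lemma smooth_box_nonneg: "smooth_box L P s \<ge> 0"
  unfolding smooth_box_def by (intro mult_nonneg_nonneg sum_nonneg) (auto intro: fejer_nonneg)

lemma fejer_window_sum:
  assumes "L > 0" "P > 0"
  shows "(1 / real P) * (\<Sum>i\<in>{a..<a + int (L*P)}. fejer L P (s - of_int i / real P)) = 1"
proof -
  have "{a..<a + int (L*P)} = (\<lambda>i. a + int i) ` {..<L*P}"
  proof (intro equalityI subsetI)
    fix x assume "x \<in> {a..<a + int (L*P)}"
    hence "x = a + int (nat (x - a))" "nat (x - a) < L*P" by (auto simp: nat_less_iff)
    thus "x \<in> (\<lambda>i. a + int i) ` {..<L*P}" by blast
  qed (auto simp flip: of_nat_mult)
  hence "(\<Sum>i\<in>{a..<a + int (L*P)}. fejer L P (s - of_int i / real P))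
      = (\<Sum>i<L*P. fejer L P (s - (of_int a + real i) / real P))"
    by (simp add: sum.reindex inj_on_def)
  thus ?thesis using fejer_shifts_sum[OF assms, of s a] by simp
qed

text \<open>One full period of shifts \<open>i / P\<close>, centred at \<open>r\<close>.\<close>
definition fejer_window :: "nat \<Rightarrow> nat \<Rightarrow> real \<Rightarrow> int set" where
  "fejer_window L P r = {\<lceil>(r - real L / 2) * real P\<rceil>..<\<lceil>(r - real L / 2) * real P\<rceil> + int (L*P)}"

lemma fejer_window_dist:
  assumes "P > 0" "i \<in> fejer_window L P r"
  shows "\<bar>r - of_int i / real P\<bar> \<le> real L / 2"
proof -
  define a where "a = \<lceil>(r - real L / 2) * real P\<rceil>"
  have "a \<le> i" "i + 1 \<le> a + int (L*P)" using assms(2) by (auto simp: fejer_window_def a_def)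
  hence "(r - real L / 2) * real P \<le> of_int i" "of_int (i + 1) \<le> (of_int (a + int (L*P)) :: real)"
    unfolding a_def by (simp_all only: ceiling_le_iff of_int_le_iff)
  moreover have "of_int a < (r - real L / 2) * real P + 1" unfolding a_def by linarith
  ultimately have "r - real L / 2 \<le> of_int i / real P" "of_int i / real P < r + real L / 2"
    using assms(1) by (simp_all add: field_simps)
  thus ?thesis by linarith
qed

lemma central_block_subset_fejer_window:
  assumes "P > 0" "\<bar>r\<bar> + 1/2 \<le> real L / 2"
  shows "central_block P \<subseteq> fejer_window L P r"
proof
  fix j assume "j \<in> central_block P"
  define x where "x = (r - real L / 2) * real P"
  have "r - real L / 2 \<le> of_int j / real P" "of_int j / real P < r + real L / 2"
    using assms central_block_iff[OF assms(1), of j] \<open>j \<in> central_block P\<close> by linarith+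
  hence "x \<le> of_int j" "of_int j < x + real L * real P"
    using assms(1) by (simp_all add: x_def field_simps)
  moreover have "of_int (\<lceil>x\<rceil> + int (L*P)) = of_int \<lceil>x\<rceil> + real L * real P" "x \<le> of_int \<lceil>x\<rceil>"
    by simp_all
  ultimately have "\<lceil>x\<rceil> \<le> j" "of_int j < (of_int (\<lceil>x\<rceil> + int (L*P)) :: real)"
    by (simp add: ceiling_le_iff, linarith)
  thus "j \<in> fejer_window L P r"
    unfolding fejer_window_def of_int_less_iff x_def by simp
qed

lemma smooth_box_le_1:
  assumes "L > 0" "P > 0"
  shows "smooth_box L P s \<le> 1"
proof -
  have "central_block P \<subseteq> fejer_window L P 0"
    using assms by (intro central_block_subset_fejer_window) auto
  hence "smooth_box L P s \<le> (1 / real P) * (\<Sum>i\<in>fejer_window L P 0. fejer L P (s - of_int i / real P))"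
    unfolding smooth_box_def by (intro mult_left_mono sum_mono2) (auto simp: fejer_window_def intro: fejer_nonneg)
  also have "\<dots> = 1" unfolding fejer_window_def by (rule fejer_window_sum[OF assms])
  finally show ?thesis .
qed

text \<open>Away from the edges of the box, the smoothing only loses the Fejer mass outside one period.\<close>
lemma one_minus_smooth_box_le:
  assumes "L \<ge> 2" "P > 0" "\<delta> > 0" "1 / real P \<le> \<delta>" "\<bar>r\<bar> \<le> 1/2 - \<delta>"
  shows "1 - smooth_box L P r \<le> 16 / (real P * \<delta>)"
proof -
  define W where "W = fejer_window L P r"
  have sub: "central_block P \<subseteq> W"
    unfolding W_def using assms by (intro central_block_subset_fejer_window) linarith+
  have fW: "finite W" by (simp add: W_def fejer_window_def)
  have L0: "L > 0" using assms(1) by simp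
  have "1 = (1 / real P) * (\<Sum>i\<in>W. fejer L P (r - of_int i / real P))"
    unfolding W_def fejer_window_def by (rule fejer_window_sum[OF L0 assms(2), symmetric])
  also have "\<dots> = smooth_box L P r + (1 / real P) * (\<Sum>i\<in>W - central_block P. fejer L P (r - of_int i / real P))"
    unfolding smooth_box_def sum.subset_diff[OF sub fW] by (simp add: algebra_simps)
  finally have eq: "1 - smooth_box L P r = (1 / real P) * (\<Sum>i\<in>W - central_block P. fejer L P (r - of_int i / real P))"
    by simp
  have "(1 / real P) * (\<Sum>i\<in>W - central_block P. fejer L P (r - of_int i / real P)) \<le> 16 / (real P * \<delta>)"
  proof (rule fejer_tail_sum)
    fix i assume i: "i \<in> W - central_block P"
    hence "\<not> (-1/2 \<le> of_int i / real P \<and> of_int i / real P < 1/2)"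
      using central_block_iff[OF assms(2), of i] by simp
    moreover have "1/2 \<le> \<bar>x\<bar>" if "\<not> (-1/2 \<le> x \<and> x < 1/2)" for x :: real
      using that by (auto simp: abs_if)
    ultimately have "1/2 \<le> \<bar>of_int i / real P\<bar>" by blast
    hence "\<delta> \<le> \<bar>r - of_int i / real P\<bar>"
      using assms(5) abs_triangle_ineq2[of "of_int i / real P" r] abs_minus_commute[of r "of_int i / real P"]
      by linarith
    thus "\<delta> \<le> \<bar>r - of_int i / real P\<bar> \<and> \<bar>r - of_int i / real P\<bar> \<le> real L / 2"
      using fejer_window_dist[OF assms(2)] i by (simp add: W_def)
  qed (use fW assms in auto)
  thus ?thesis using eq by simp
qed

lemma smooth_box_sum_far:
  fixes r \<rho> :: real and D :: "int set"
  assumes "finite D" "L > 0" "P > 0" "\<rho> > 0" "1 / real P \<le> \<rho>"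
    and far: "\<And>n. n \<in> D \<Longrightarrow> \<rho> + 1/2 \<le> \<bar>r + of_int n\<bar> \<and> \<bar>r + of_int n\<bar> + 1/2 \<le> real L / 2"
  shows "(\<Sum>n\<in>D. smooth_box L P (r + of_int n)) \<le> 16 / (real P * \<rho>)"
proof -
  have P0: "real P > 0" using assms by simp
  define h where "h = (\<lambda>(n, j). j - n * int P)"
  have key: "r + of_int n - of_int j / real P = r - of_int (h (n, j)) / real P" for n j
    using P0 by (simp add: h_def field_simps)
  have inj: "inj_on h (D \<times> central_block P)"
  proof (rule inj_onI, clarify)
    fix n1 j1 n2 j2 assume A: "j1 \<in> central_block P" "j2 \<in> central_block P" "h (n1, j1) = h (n2, j2)"
    hence e: "j1 - j2 = (n1 - n2) * int P" by (simp add: h_def algebra_simps)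
    have b: "\<bar>j1 - j2\<bar> < int P" using A(1,2) by (auto simp: central_block_def)
    have "n1 = n2"
    proof (rule ccontr)
      assume "n1 \<noteq> n2"
      hence "1 * int P \<le> \<bar>n1 - n2\<bar> * int P" by (intro mult_right_mono) auto
      thus False using b e by (simp add: abs_mult)
    qed
    thus "n1 = n2 \<and> j1 = j2" using e by simp
  qed
  have "(\<Sum>n\<in>D. smooth_box L P (r + of_int n))
      = (1 / real P) * (\<Sum>p\<in>D \<times> central_block P. fejer L P (r - of_int (h p) / real P))"
    unfolding smooth_box_def by (simp add: sum_distrib_left sum.cartesian_product key)
  also have "\<dots> = (1 / real P) * (\<Sum>i\<in>h ` (D \<times> central_block P). fejer L P (r - of_int i / real P))"
    by (simp add: sum.reindex[OF inj] comp_def)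
  also have "\<dots> \<le> 16 / (real P * \<rho>)"
  proof (rule fejer_tail_sum)
    fix i assume "i \<in> h ` (D \<times> central_block P)"
    then obtain n j where nj: "n \<in> D" "j \<in> central_block P" "i = h (n, j)" by auto
    have "\<bar>of_int j / real P\<bar> \<le> 1/2" using abs_central_block_le nj(2) assms(3) by blast
    thus "\<rho> \<le> \<bar>r - of_int i / real P\<bar> \<and> \<bar>r - of_int i / real P\<bar> \<le> real L / 2"
      using far[OF nj(1)] key[of n j] nj(3) by (simp only: abs_le_iff) linarith
  qed (use assms in auto)
  finally show ?thesis .
qed

lemma sum_smooth_box_reflect:
  "(\<Sum>z\<in>Z. smooth_box L P (t - of_int z)) = (\<Sum>n\<in>(\<lambda>z. nint t - z) ` Z. smooth_box L P (t - of_int (nint t) + of_int n))"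
  by (simp add: sum.reindex inj_on_def comp_def)

text \<open>The hypothesis on \<open>L\<close> keeps all points \<open>t - z\<close>, \<open>z \<in> [N]\<close>, well inside one period of \<open>fejer L P\<close>.\<close>
lemma box_smoothing_error_le:
  assumes "L > 0" "P > 0" and LB: "\<bar>of_int (nint t)\<bar> + real N + 1 \<le> real L / 2"
  shows "(\<Sum>z\<in>{1..int N}. \<bar>box (t - of_int z) - smooth_box L P (t - of_int z)\<bar>) \<le> 20"
proof -
  define r where "r = t - of_int (nint t)"
  define D where "D = (\<lambda>z. nint t - z) ` {1..int N}"
  have r: "\<bar>r\<bar> \<le> 1/2" using nint_bounds[of t] unfolding r_def by linarith
  have D: "\<bar>of_int n\<bar> \<le> \<bar>of_int (nint t)\<bar> + real N" if "n \<in> D" for n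
    using that by (auto simp: D_def)
  define D1 where "D1 = {n\<in>D. \<bar>n\<bar> \<le> 1}"
  define D2 where "D2 = {n\<in>D. \<not> \<bar>n\<bar> \<le> 1}"
  have fin: "finite D1" "finite D2" unfolding D1_def D2_def D_def by (rule finite_subset[OF _ finite_imageI[OF finite_atLeastAtMost_int]], blast)+
  have "(\<Sum>n\<in>D1. smooth_box L P (r + of_int n)) \<le> (\<Sum>n\<in>{-1..1::int}. 1)"
    by (rule order_trans[OF sum_mono sum_mono2]) (auto simp: D1_def intro: smooth_box_le_1 assms)
  moreover have "(\<Sum>n\<in>D2. smooth_box L P (r + of_int n)) \<le> 16 / (real P * 1)"
  proof (rule smooth_box_sum_far)
    fix n assume n: "n \<in> D2"
    have "2 \<le> \<bar>of_int n :: real\<bar>" using n by (simp add: D2_def) linarith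
    moreover have "\<bar>of_int n\<bar> \<le> \<bar>of_int (nint t)\<bar> + real N" using n D by (simp add: D2_def)
    ultimately show "1 + 1/2 \<le> \<bar>r + of_int n\<bar> \<and> \<bar>r + of_int n\<bar> + 1/2 \<le> real L / 2"
      using r LB abs_triangle_ineq[of r "of_int n"] abs_add_ge_diff[where a = r and b = "of_int n"] by linarith
  qed (use assms fin in auto)
  moreover have "16 / real P \<le> 16" using assms(2) by (simp add: divide_le_eq)
  moreover have "D = D1 \<union> D2" "D1 \<inter> D2 = {}" by (auto simp: D1_def D2_def)
  ultimately have far: "(\<Sum>n\<in>D. smooth_box L P (r + of_int n)) \<le> 19"
    using sum.union_disjoint[OF fin, of "\<lambda>n. smooth_box L P (r + of_int n)"] by simp
  have "(\<Sum>z\<in>{1..int N}. \<bar>box (t - of_int z) - smooth_box L P (t - of_int z)\<bar>)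
      \<le> (\<Sum>z\<in>{1..int N}. box (t - of_int z)) + (\<Sum>z\<in>{1..int N}. smooth_box L P (t - of_int z))"
    by (subst sum.distrib[symmetric], rule sum_mono)
       (auto simp: box_def smooth_box_nonneg abs_le_iff intro: order_trans[OF _ smooth_box_nonneg])
  also have "(\<Sum>z\<in>{1..int N}. box (t - of_int z)) \<le> 1"
    by (simp add: box_diff_of_int sum.delta)
  also have "(\<Sum>z\<in>{1..int N}. smooth_box L P (t - of_int z)) \<le> 19"
    using far by (simp add: sum_smooth_box_reflect r_def D_def)
  finally show ?thesis by simp
qed

lemma box_smoothing_error_le_far:
  assumes "L > 0" "P > 0" and LB: "\<bar>of_int (nint t)\<bar> + real N + 1 \<le> real L / 2"
    and "\<delta> > 0" "1 / real P \<le> \<delta>" and r: "\<bar>t - of_int (nint t)\<bar> \<le> 1/2 - \<delta>"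
  shows "(\<Sum>z\<in>{1..int N}. \<bar>box (t - of_int z) - smooth_box L P (t - of_int z)\<bar>) \<le> 32 / (real P * \<delta>)"
proof -
  define B' where "B' = {1..int N} - {nint t}"
  have "(\<Sum>z\<in>{1..int N}. \<bar>box (t - of_int z) - smooth_box L P (t - of_int z)\<bar>)
      \<le> (1 - smooth_box L P (t - of_int (nint t))) + (\<Sum>z\<in>B'. smooth_box L P (t - of_int z))"
  proof -
    have "\<forall>z\<in>B'. \<bar>box (t - of_int z) - smooth_box L P (t - of_int z)\<bar> = smooth_box L P (t - of_int z)"
      by (simp add: B'_def box_diff_of_int smooth_box_nonneg)
    moreover have "\<bar>box (t - of_int (nint t)) - smooth_box L P (t - of_int (nint t))\<bar> = 1 - smooth_box L P (t - of_int (nint t))"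
      using smooth_box_le_1[OF assms(1,2)] by (simp add: box_diff_of_int)
    moreover have "0 \<le> 1 - smooth_box L P (t - of_int (nint t))"
      using smooth_box_le_1[OF assms(1,2)] by simp
    ultimately show ?thesis
    proof (cases "nint t \<in> {1..int N}")
      case False
      hence "B' = {1..int N}" by (simp add: B'_def)
      thus ?thesis using \<open>\<forall>z\<in>B'. _\<close> \<open>0 \<le> _\<close> by simp
    qed (simp add: B'_def sum.remove)
  qed
  also have "1 - smooth_box L P (t - of_int (nint t)) \<le> 16 / (real P * \<delta>)"
    by (rule one_minus_smooth_box_le) (use assms in auto)
  also have "(\<Sum>z\<in>B'. smooth_box L P (t - of_int z)) \<le> 16 / (real P * \<delta>)"
    unfolding sum_smooth_box_reflect
  proof (rule smooth_box_sum_far)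
    fix n assume "n \<in> (\<lambda>z. nint t - z) ` B'"
    then obtain z where "z \<in> B'" "n = nint t - z" by auto
    hence z: "z \<in> {1..int N}" "z \<noteq> nint t" "n = nint t - z" by (auto simp: B'_def)
    hence "1 \<le> \<bar>of_int n :: real\<bar>" "\<bar>of_int n\<bar> \<le> \<bar>of_int (nint t)\<bar> + real N" by auto
    thus "\<delta> + 1/2 \<le> \<bar>t - of_int (nint t) + of_int n\<bar> \<and> \<bar>t - of_int (nint t) + of_int n\<bar> + 1/2 \<le> real L / 2"
      using r LB \<open>\<delta> > 0\<close> abs_triangle_ineq[of "t - of_int (nint t)" "of_int n"]
        abs_add_ge_diff[where a = "t - of_int (nint t)" and b = "of_int n"] by linarith
  qed (use assms in \<open>auto simp: B'_def\<close>)
  finally show ?thesis by (simp add: mult.commute)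
qed

section \<open>Fejer-weighted trilinear sums\<close>

lemma sum_swap_1_2: "(\<Sum>z\<in>C. \<Sum>j\<in>J. \<Sum>j'\<in>J'. h z j j') = (\<Sum>j\<in>J. \<Sum>j'\<in>J'. \<Sum>z\<in>C. h z j j')"
  by (subst sum.swap) (rule sum.cong[OF refl], rule sum.swap)

lemma sum_swap_2_2: "(\<Sum>y\<in>B. \<Sum>z\<in>C. \<Sum>j\<in>J. \<Sum>j'\<in>J'. g y z j j')
   = (\<Sum>j\<in>J. \<Sum>j'\<in>J'. \<Sum>y\<in>B. \<Sum>z\<in>C. g y z j j')"
  by (subst sum_swap_1_2[symmetric]) (rule sum.cong[OF refl], rule sum_swap_1_2)

lemma sum_swap_3_2: "(\<Sum>x\<in>A. \<Sum>y\<in>B. \<Sum>z\<in>C. \<Sum>j\<in>J. \<Sum>j'\<in>J'. g x y z j j')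
   = (\<Sum>j\<in>J. \<Sum>j'\<in>J'. \<Sum>x\<in>A. \<Sum>y\<in>B. \<Sum>z\<in>C. g x y z j j')"
  by (subst sum_swap_1_2[symmetric]) (rule sum.cong[OF refl], rule sum_swap_2_2)

lemma sum_swap_3_1: "(\<Sum>x\<in>A. \<Sum>y\<in>B. \<Sum>z\<in>C. \<Sum>j\<in>J. g x y z j) = (\<Sum>j\<in>J. \<Sum>x\<in>A. \<Sum>y\<in>B. \<Sum>z\<in>C. g x y z j)"
  using sum_swap_3_2[where J' = "{()}" and g = "\<lambda>x y z j _. g x y z j"] by simp

lemma sum_product3:
  fixes a b c :: "'a \<Rightarrow> complex"
  shows "(\<Sum>x\<in>A. \<Sum>y\<in>B. \<Sum>z\<in>C. a x * b y * c z) = (\<Sum>x\<in>A. a x) * (\<Sum>y\<in>B. b y) * (\<Sum>z\<in>C. c z)"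
proof -
  have "(\<Sum>x\<in>A. a x) * (\<Sum>y\<in>B. b y) * (\<Sum>z\<in>C. c z) = (\<Sum>x\<in>A. a x * ((\<Sum>y\<in>B. b y) * (\<Sum>z\<in>C. c z)))"
    by (simp add: sum_distrib_right mult.assoc)
  also have "\<dots> = (\<Sum>x\<in>A. a x * (\<Sum>y\<in>B. \<Sum>z\<in>C. b y * c z))"
    by (simp only: sum_product)
  also have "\<dots> = (\<Sum>x\<in>A. \<Sum>y\<in>B. \<Sum>z\<in>C. a x * b y * c z)"
    by (simp only: sum_distrib_left mult.assoc)
  finally show ?thesis by simp
qed

definition fourier_sum :: "(int \<Rightarrow> real) \<Rightarrow> nat \<Rightarrow> real \<Rightarrow> complex" where
  "fourier_sum f N \<theta> = (\<Sum>x\<in>{1..int N}. of_real (f x) * e (of_int x * \<theta>))"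

definition fejer_energy :: "nat \<Rightarrow> nat \<Rightarrow> nat \<Rightarrow> (int \<Rightarrow> real) \<Rightarrow> real \<Rightarrow> real" where
  "fejer_energy L P N f lm = (\<Sum>y\<in>{1..int N}. \<Sum>y'\<in>{1..int N}. f y * f y' * fejer L P (lm * (of_int y - of_int y')))"

lemma fourier_sum_frac: "fourier_sum f N (frac \<theta>) = fourier_sum f N \<theta>"
  unfolding fourier_sum_def
proof (intro sum.cong refl)
  fix n :: int
  have "of_int n * \<theta> = of_int n * frac \<theta> + of_int (n * \<lfloor>\<theta>\<rfloor>)" by (simp add: frac_def algebra_simps)
  hence "e (of_int n * \<theta>) = e (of_int n * frac \<theta>)" by (simp only: e_add e_of_int mult_1_right)
  thus "of_real (f n) * e (of_int n * frac \<theta>) = of_real (f n) * e (of_int n * \<theta>)" by simp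
qed

lemma norm_fourier_sum_le: "cmod (fourier_sum f N \<theta>) \<le> (\<Sum>n\<in>{1..int N}. \<bar>f n\<bar>)"
  unfolding fourier_sum_def by (rule order_trans[OF norm_sum]) (simp add: norm_mult)

lemma norm_fourier_sum_squared: "complex_of_real ((cmod (fourier_sum f N \<theta>))^2)
   = (\<Sum>y\<in>{1..int N}. \<Sum>y'\<in>{1..int N}. of_real (f y * f y') * e ((of_int y - of_int y') * \<theta>))"
proof -
  have "complex_of_real ((cmod (fourier_sum f N \<theta>))^2) = fourier_sum f N \<theta> * cnj (fourier_sum f N \<theta>)" by (rule complex_norm_square)
  also have "\<dots> = (\<Sum>y\<in>{1..int N}. of_real (f y) * e (of_int y * \<theta>)) * (\<Sum>y'\<in>{1..int N}. of_real (f y') * e (- (of_int y' * \<theta>)))"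
    unfolding fourier_sum_def by (simp add: cnj_e)
  also have "\<dots> = (\<Sum>y\<in>{1..int N}. \<Sum>y'\<in>{1..int N}. (of_real (f y) * e (of_int y * \<theta>)) * (of_real (f y') * e (- (of_int y' * \<theta>))))"
    by (simp add: sum_product)
  also have "\<dots> = (\<Sum>y\<in>{1..int N}. \<Sum>y'\<in>{1..int N}. of_real (f y * f y') * e ((of_int y - of_int y') * \<theta>))"
    by (intro sum.cong refl) (simp add: e_diff cnj_e algebra_simps)
  finally show ?thesis .
qed

lemma fejer_energy_eq:
  assumes "L > 0" "P > 0"
  shows "fejer_energy L P N f lm = (1 / (real L * real (L*P))) *
     (\<Sum>j<L*P. \<Sum>j'<L*P. (cmod (fourier_sum f N ((real j - real j') * lm / real L)))^2)"
proof -
  let ?K = "L*P" and ?B = "{1..int N}"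
  define c where "c = 1 / (real L * real ?K)"
  have "complex_of_real (fejer_energy L P N f lm)
     = (\<Sum>y\<in>?B. \<Sum>y'\<in>?B. of_real (f y * f y') * (of_real c * (\<Sum>j<?K. \<Sum>j'<?K. e ((real j - real j') * (lm * (of_int y - of_int y') / real L)))))"
    unfolding fejer_energy_def of_real_sum c_def by (intro sum.cong refl) (simp add: fejer_expansion[OF assms])
  also have "\<dots> = of_real c * (\<Sum>y\<in>?B. \<Sum>y'\<in>?B. \<Sum>j<?K. \<Sum>j'<?K. of_real (f y * f y') * e ((of_int y - of_int y') * ((real j - real j') * lm / real L)))"
    by (simp add: sum_distrib_left algebra_simps)
  also have "\<dots> = of_real c * (\<Sum>j<?K. \<Sum>j'<?K. \<Sum>y\<in>?B. \<Sum>y'\<in>?B. of_real (f y * f y') * e ((of_int y - of_int y') * ((real j - real j') * lm / real L)))"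
    by (subst sum_swap_2_2) (rule refl)
  also have "\<dots> = of_real c * (\<Sum>j<?K. \<Sum>j'<?K. complex_of_real ((cmod (fourier_sum f N ((real j - real j') * lm / real L)))^2))"
    by (simp only: norm_fourier_sum_squared)
  also have "\<dots> = complex_of_real (c * (\<Sum>j<?K. \<Sum>j'<?K. (cmod (fourier_sum f N ((real j - real j') * lm / real L)))^2))"
    by simp
  finally show ?thesis unfolding c_def using of_real_eq_iff by blast
qed

lemma fejer_energy_nonneg: assumes "L > 0" "P > 0" shows "fejer_energy L P N f lm \<ge> 0"
  unfolding fejer_energy_eq[OF assms] by (intro mult_nonneg_nonneg sum_nonneg) auto

lemma fejer_triple_sum_expansion:
  fixes f1 f2 f3 :: "int \<Rightarrow> real" and l1 l2 l3 t :: real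
  assumes "L > 0" "P > 0"
  shows "complex_of_real (\<Sum>x\<in>{1..int N}. \<Sum>y\<in>{1..int N}. \<Sum>z\<in>{1..int N}.
            f1 x * f2 y * f3 z * fejer L P (l1 * of_int x + l2 * of_int y + l3 * of_int z - t))
    = of_real (1 / (real L * real (L*P))) * (\<Sum>j<L*P. \<Sum>j'<L*P. e (- ((real j - real j') / real L * t)) *
        (fourier_sum f1 N ((real j - real j') / real L * l1) * fourier_sum f2 N ((real j - real j') / real L * l2) * fourier_sum f3 N ((real j - real j') / real L * l3)))"
proof -
  let ?K = "L*P" and ?B = "{1..int N}"
  define c where "c = 1 / (real L * real ?K)"
  define k where "k j j' = (real j - real j') / real L" for j j' :: nat
  have ef: "e ((real j - real j') * ((l1 * of_int x + l2 * of_int y + l3 * of_int z - t) / real L))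
     = e (- (k j j' * t)) * (e (of_int x * (k j j' * l1)) * e (of_int y * (k j j' * l2)) * e (of_int z * (k j j' * l3)))"
    for j j' :: nat and x y z :: int
  proof -
    have "(real j - real j') * ((l1 * of_int x + l2 * of_int y + l3 * of_int z - t) / real L)
       = - (k j j' * t) + (of_int x * (k j j' * l1) + of_int y * (k j j' * l2) + of_int z * (k j j' * l3))"
      using assms(1) by (simp add: k_def field_simps)
    note h = this
    show ?thesis by (subst h) (simp only: e_add)
  qed
  have "complex_of_real (\<Sum>x\<in>?B. \<Sum>y\<in>?B. \<Sum>z\<in>?B. f1 x * f2 y * f3 z * fejer L P (l1 * of_int x + l2 * of_int y + l3 * of_int z - t))
    = (\<Sum>x\<in>?B. \<Sum>y\<in>?B. \<Sum>z\<in>?B. of_real (f1 x * f2 y * f3 z) * (of_real c * (\<Sum>j<?K. \<Sum>j'<?K.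
          e ((real j - real j') * ((l1 * of_int x + l2 * of_int y + l3 * of_int z - t) / real L)))))"
    unfolding of_real_sum c_def by (intro sum.cong refl) (simp add: fejer_expansion[OF assms(1,2)])
  also have "\<dots> = (\<Sum>x\<in>?B. \<Sum>y\<in>?B. \<Sum>z\<in>?B. of_real (f1 x * f2 y * f3 z) * (of_real c * (\<Sum>j<?K. \<Sum>j'<?K.
          e (- (k j j' * t)) * (e (of_int x * (k j j' * l1)) * e (of_int y * (k j j' * l2)) * e (of_int z * (k j j' * l3))))))"
    by (simp only: ef)
  also have "\<dots> = of_real c * (\<Sum>x\<in>?B. \<Sum>y\<in>?B. \<Sum>z\<in>?B. \<Sum>j<?K. \<Sum>j'<?K. e (- (k j j' * t)) *
        ((of_real (f1 x) * e (of_int x * (k j j' * l1))) * (of_real (f2 y) * e (of_int y * (k j j' * l2))) * (of_real (f3 z) * e (of_int z * (k j j' * l3)))))"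
    by (simp add: sum_distrib_left mult_ac)
  also have "\<dots> = of_real c * (\<Sum>j<?K. \<Sum>j'<?K. \<Sum>x\<in>?B. \<Sum>y\<in>?B. \<Sum>z\<in>?B. e (- (k j j' * t)) *
        ((of_real (f1 x) * e (of_int x * (k j j' * l1))) * (of_real (f2 y) * e (of_int y * (k j j' * l2))) * (of_real (f3 z) * e (of_int z * (k j j' * l3)))))"
    by (subst sum_swap_3_2) (rule refl)
  also have "\<dots> = of_real c * (\<Sum>j<?K. \<Sum>j'<?K. e (- (k j j' * t)) *
        (fourier_sum f1 N (k j j' * l1) * fourier_sum f2 N (k j j' * l2) * fourier_sum f3 N (k j j' * l3)))"
  proof -
    have tp: "(\<Sum>x\<in>?B. \<Sum>y\<in>?B. \<Sum>z\<in>?B. e (- (k j j' * t)) *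
        ((of_real (f1 x) * e (of_int x * (k j j' * l1))) * (of_real (f2 y) * e (of_int y * (k j j' * l2))) * (of_real (f3 z) * e (of_int z * (k j j' * l3)))))
      = e (- (k j j' * t)) * (fourier_sum f1 N (k j j' * l1) * fourier_sum f2 N (k j j' * l2) * fourier_sum f3 N (k j j' * l3))" for j j'
      unfolding fourier_sum_def by (subst sum_product3[symmetric]) (simp only: sum_distrib_left)
    show ?thesis by (simp only: tp)
  qed
  finally show ?thesis by (simp only: c_def k_def)
qed

lemma norm_triple_product_le:
  fixes w a b c :: complex
  assumes "cmod w = 1" "cmod a \<le> U"
  shows "cmod (w * (a * b * c)) \<le> U * ((cmod b)^2 + (cmod c)^2) / 2"
proof -
  have U0: "U \<ge> 0" using assms(2) norm_ge_zero order_trans by blast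
  have "cmod b * cmod c \<le> ((cmod b)^2 + (cmod c)^2) / 2"
    using sum_squares_bound[of "cmod b" "cmod c"] by (simp add: power2_eq_square field_simps)
  moreover have "cmod (w * (a * b * c)) = cmod a * (cmod b * cmod c)" using assms(1) by (simp add: norm_mult)
  ultimately show ?thesis using assms(2) U0
    by (metis mult_mono' norm_ge_zero zero_le_mult_iff times_divide_eq_right)
qed

text \<open>Expanding the kernel turns the weighted sum into an average of products of three Fourier
  sums; bounding the first uniformly and the other two by AM-GM leaves the two energies.\<close>
lemma fejer_triple_sum_le:
  fixes f1 f2 f3 :: "int \<Rightarrow> real" and l1 l2 l3 t U :: real
  assumes "L > 0" "P > 0" and U: "\<And>\<theta>. cmod (fourier_sum f1 N \<theta>) \<le> U"
  shows "\<bar>\<Sum>x\<in>{1..int N}. \<Sum>y\<in>{1..int N}. \<Sum>z\<in>{1..int N}.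
            f1 x * f2 y * f3 z * fejer L P (l1 * of_int x + l2 * of_int y + l3 * of_int z - t)\<bar>
         \<le> U / 2 * (fejer_energy L P N f2 l2 + fejer_energy L P N f3 l3)"
proof -
  let ?K = "L*P" and ?B = "{1..int N}"
  define c where "c = 1 / (real L * real ?K)"
  have c0: "c \<ge> 0" by (simp add: c_def)
  define k where "k j j' = (real j - real j') / real L" for j j' :: nat
  have U0: "U \<ge> 0" using U[of 0] norm_ge_zero order_trans by blast
  note eq = fejer_triple_sum_expansion[OF assms(1,2), of f1 f2 f3 l1 l2 l3 t N, folded c_def k_def]
  let ?X = "\<lambda>j j'. e (- (k j j' * t)) * (fourier_sum f1 N (k j j' * l1) * fourier_sum f2 N (k j j' * l2) * fourier_sum f3 N (k j j' * l3))"
  have "\<bar>\<Sum>x\<in>?B. \<Sum>y\<in>?B. \<Sum>z\<in>?B. f1 x * f2 y * f3 z * fejer L P (l1 * of_int x + l2 * of_int y + l3 * of_int z - t)\<bar>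
     = cmod (of_real c * (\<Sum>j<?K. \<Sum>j'<?K. ?X j j'))"
    using arg_cong[OF eq, of cmod] by (simp only: norm_of_real)
  also have "\<dots> = c * cmod (\<Sum>j<?K. \<Sum>j'<?K. ?X j j')" using c0 by (simp add: norm_mult)
  also have "\<dots> \<le> c * (\<Sum>j<?K. \<Sum>j'<?K. cmod (?X j j'))"
    by (intro mult_left_mono c0 order_trans[OF norm_sum] sum_mono norm_sum)
  also have "\<dots> \<le> c * (\<Sum>j<?K. \<Sum>j'<?K. U * ((cmod (fourier_sum f2 N (k j j' * l2)))^2 + (cmod (fourier_sum f3 N (k j j' * l3)))^2) / 2)"
    by (intro mult_left_mono sum_mono c0 norm_triple_product_le U) simp
  also have "\<dots> = U / 2 * (c * (\<Sum>j<?K. \<Sum>j'<?K. (cmod (fourier_sum f2 N (k j j' * l2)))^2)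
       + c * (\<Sum>j<?K. \<Sum>j'<?K. (cmod (fourier_sum f3 N (k j j' * l3)))^2))"
    by (simp add: sum_distrib_left sum.distrib algebra_simps add_divide_distrib)
  also have "\<dots> = U / 2 * (fejer_energy L P N f2 l2 + fejer_energy L P N f3 l3)"
    unfolding fejer_energy_eq[OF assms(1,2)] c_def k_def by (simp add: mult.commute mult.left_commute)
  finally show ?thesis .
qed

text \<open>A row of the energy has at most \<open>2 / |q| + 1\<close> terms at distance \<open>< 1\<close>, each at most \<open>P\<close>;
  the remaining terms decay like inverse squares.\<close>
definition energy_const :: "real \<Rightarrow> nat \<Rightarrow> real" where
  "energy_const q P = real P * (2 / \<bar>q\<bar> + 1) + 8 * (1 + \<bar>q\<bar>) / (real P * \<bar>q\<bar>)"

lemma card_near_le: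
  fixes q :: real and y :: int and S :: "int set"
  assumes "q > 0" "S \<subseteq> {y'. \<bar>q * (of_int y - of_int y')\<bar> < 1}"
  shows "real (card S) \<le> 2 / q + 1"
proof -
  define lo where "lo = \<lceil>of_int y - 1/q\<rceil>"
  define hi where "hi = \<lfloor>of_int y + 1/q\<rfloor>"
  have "S \<subseteq> {lo..hi}"
  proof
    fix y' assume "y' \<in> S"
    hence "\<bar>q * (of_int y - of_int y')\<bar> < 1" using assms by auto
    hence "q * \<bar>of_int y - of_int y'\<bar> < 1" by (simp only: abs_mult abs_of_pos[OF assms(1)])
    hence "\<bar>of_int y - of_int y'\<bar> < 1/q" using assms by (simp add: field_simps)
    hence "of_int y - 1/q \<le> of_int y'" "of_int y' \<le> of_int y + 1/q" by linarith+
    thus "y' \<in> {lo..hi}" unfolding lo_def hi_def by (simp only: atLeastAtMost_iff ceiling_le_iff le_floor_iff)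
  qed
  hence "card S \<le> card {lo..hi}" by (intro card_mono) auto
  also have "card {lo..hi} = nat (hi - lo + 1)" by simp
  finally have c: "real (card S) \<le> real (nat (hi - lo + 1))" by simp
  have "of_int hi \<le> of_int y + 1/q" "of_int y - 1/q \<le> of_int lo" unfolding lo_def hi_def by auto
  hence "real_of_int (hi - lo + 1) \<le> 2/q + 1" by simp
  moreover have "0 \<le> 2/q + 1" using assms by simp
  ultimately have "real (nat (hi - lo + 1)) \<le> 2/q + 1" by (cases "hi - lo + 1 \<ge> 0") auto
  thus ?thesis using c by linarith
qed

lemma fejer_row_sum_le:
  fixes lm :: real and y :: int
  assumes L0: "L > 0" and P0: "P > 0" and lm: "lm \<noteq> 0" and LN: "\<bar>lm\<bar> * real N \<le> real L / 2"
    and y: "y \<in> {1..int N}"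
  shows "(\<Sum>y'\<in>{1..int N}. fejer L P (lm * (of_int y - of_int y'))) \<le> energy_const lm P"
proof -
  define q where "q = \<bar>lm\<bar>"
  have q0: "q > 0" using lm by (simp add: q_def)
  define r where "r = q * of_int y"
  have abs_eq: "\<bar>r - of_int y' * q\<bar> = \<bar>lm\<bar> * \<bar>of_int y - of_int y'\<bar>" for y'
    by (simp add: r_def q_def algebra_simps flip: abs_mult)
  have fejer_eq: "fejer L P (lm * (of_int y - of_int y')) = fejer L P (r - of_int y' * q)" for y'
  proof (cases "lm \<ge> 0")
    case False
    hence "r - of_int y' * q = - (lm * (of_int y - of_int y'))" by (simp add: q_def r_def algebra_simps)
    thus ?thesis by (simp add: fejer_minus)
  qed (simp add: q_def r_def algebra_simps)
  define Bn where "Bn = {y'\<in>{1..int N}. \<bar>r - of_int y' * q\<bar> < 1}"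
  define Bf where "Bf = {y'\<in>{1..int N}. \<not> \<bar>r - of_int y' * q\<bar> < 1}"
  have fin: "finite Bn" "finite Bf" unfolding Bn_def Bf_def by (rule finite_subset[of _ "{1..int N}"], auto)+
  have "(\<Sum>y'\<in>{1..int N}. fejer L P (lm * (of_int y - of_int y')))
      = (\<Sum>y'\<in>Bn. fejer L P (r - of_int y' * q)) + (\<Sum>y'\<in>Bf. fejer L P (r - of_int y' * q))"
  proof -
    have "{1..int N} = Bn \<union> Bf" "Bn \<inter> Bf = {}" by (auto simp: Bn_def Bf_def)
    thus ?thesis unfolding fejer_eq using sum.union_disjoint[OF fin] by simp
  qed
  also have "(\<Sum>y'\<in>Bn. fejer L P (r - of_int y' * q)) \<le> real (card Bn) * real P"
    using sum_mono[of Bn "\<lambda>y'. fejer L P (r - of_int y' * q)" "\<lambda>_. real P"] fejer_le[OF L0 P0] by simp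
  also have "\<dots> \<le> (2 / q + 1) * real P"
    by (intro mult_right_mono card_near_le[OF q0, of _ y]) (auto simp: Bn_def r_def algebra_simps abs_minus_commute)
  also have "(\<Sum>y'\<in>Bf. fejer L P (r - of_int y' * q)) \<le> 8 * (1 + q / 1) / (real P * q * 1)"
  proof (rule fejer_sum_separated[OF fin(2) L0 P0 q0])
    fix y' assume "y' \<in> Bf"
    hence "\<bar>of_int y - of_int y'\<bar> \<le> real N" using y by (auto simp: Bf_def)
    hence "\<bar>lm\<bar> * \<bar>of_int y - of_int y'\<bar> \<le> \<bar>lm\<bar> * real N" by (intro mult_left_mono) auto
    thus "1 \<le> \<bar>r - of_int y' * q\<bar> \<and> \<bar>r - of_int y' * q\<bar> \<le> real L / 2"
      using \<open>y' \<in> Bf\<close> LN abs_eq[of y'] by (auto simp: Bf_def)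
  qed simp
  also have "(2 / q + 1) * real P + 8 * (1 + q / 1) / (real P * q * 1) = energy_const lm P"
    unfolding energy_const_def q_def by simp
  finally show ?thesis by simp
qed

lemma fejer_energy_le:
  fixes lm :: real and f :: "int \<Rightarrow> real"
  assumes L0: "L > 0" and P0: "P > 0" and lm: "lm \<noteq> 0" and LN: "\<bar>lm\<bar> * real N \<le> real L / 2"
    and f: "\<And>y. y \<in> {1..int N} \<Longrightarrow> \<bar>f y\<bar> \<le> 1"
  shows "fejer_energy L P N f lm \<le> real N * energy_const lm P"
proof -
  have "fejer_energy L P N f lm \<le> (\<Sum>y\<in>{1..int N}. \<Sum>y'\<in>{1..int N}. fejer L P (lm * (of_int y - of_int y')))"
    unfolding fejer_energy_def
  proof (intro sum_mono)
    fix y y' assume "y \<in> {1..int N}" "y' \<in> {1..int N}"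
    hence "\<bar>f y * f y'\<bar> \<le> 1" using f by (simp add: abs_mult mult_le_one)
    hence "f y * f y' \<le> 1" by linarith
    thus "f y * f y' * fejer L P (lm * (of_int y - of_int y')) \<le> fejer L P (lm * (of_int y - of_int y'))"
      using mult_right_mono[OF _ fejer_nonneg, of "f y * f y'" 1] by simp
  qed
  also have "\<dots> \<le> (\<Sum>y\<in>{1..int N}. energy_const lm P)"
    by (intro sum_mono fejer_row_sum_le[OF L0 P0 lm LN])
  also have "\<dots> = real N * energy_const lm P" by simp
  finally show ?thesis .
qed

section \<open>Multiples of an irrational number near half-integers\<close>

text \<open>The differences \<open>d\<close> for which rounding \<open>x + \<beta> d\<close> is unstable.\<close>
definition near_half :: "real \<Rightarrow> real \<Rightarrow> int \<Rightarrow> bool" where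
  "near_half \<beta> \<delta> d \<longleftrightarrow> (\<exists>m::int. \<bar>\<beta> * of_int d - (of_int m + 1/2)\<bar> < \<delta>)"

definition near_half_count :: "real \<Rightarrow> real \<Rightarrow> nat \<Rightarrow> real" where
  "near_half_count \<beta> \<delta> N = real (card {d\<in>{- int N..int N}. near_half \<beta> \<delta> d})"

lemma not_near_half_imp_dist_nint:
  assumes "\<not> near_half \<beta> \<delta> d"
  shows "\<bar>\<beta> * of_int d - of_int (nint (\<beta> * of_int d))\<bar> \<le> 1/2 - \<delta>"
proof -
  define t where "t = \<beta> * of_int d"
  have far: "\<delta> \<le> \<bar>t - (of_int m + 1/2)\<bar>" for m :: int
    using assms by (auto simp: near_half_def t_def not_less)
  have "-1/2 \<le> t - of_int (nint t)" "t - of_int (nint t) < 1/2"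
    by (rule nint_bounds)+
  moreover have "\<delta> \<le> \<bar>t - (of_int (nint t) + 1/2)\<bar>" "\<delta> \<le> \<bar>t - (of_int (nint t - 1) + 1/2)\<bar>"
    by (rule far)+
  ultimately show ?thesis unfolding t_def[symmetric] by (simp add: abs_if split: if_splits)
qed

lemma near_half_pair:
  assumes "near_half \<beta> \<delta> d1" "near_half \<beta> \<delta> d2"
  shows "\<exists>m::int. \<bar>of_int (d2 - d1) * \<beta> - of_int m\<bar> < 2 * \<delta>"
proof -
  obtain m1 m2 :: int where "\<bar>\<beta> * of_int d1 - (of_int m1 + 1/2)\<bar> < \<delta>" "\<bar>\<beta> * of_int d2 - (of_int m2 + 1/2)\<bar> < \<delta>"
    using assms by (auto simp: near_half_def)
  hence "\<bar>of_int (d2 - d1) * \<beta> - of_int (m2 - m1)\<bar> < 2 * \<delta>"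
    by (simp add: abs_less_iff algebra_simps)
  thus ?thesis by blast
qed

lemma irrational_multiples_separated:
  fixes \<beta> :: real and Q :: int
  assumes "\<beta> \<notin> \<rat>"
  shows "\<exists>\<eta>>0. \<forall>j m. 1 \<le> j \<and> j < Q \<longrightarrow> \<eta> \<le> \<bar>of_int j * \<beta> - of_int m\<bar>"
proof -
  define g where "g j = \<bar>of_int j * \<beta> - of_int (nint (of_int j * \<beta>))\<bar>" for j :: int
  define \<eta> where "\<eta> = Min (g ` {1..<Q} \<union> {1})"
  have fin: "finite (g ` {1..<Q} \<union> {1})" by simp
  have gpos: "g j > 0" if "1 \<le> j" for j
  proof -
    have "of_int j * \<beta> \<noteq> of_int (nint (of_int j * \<beta>))"
    proof
      assume eq: "of_int j * \<beta> = of_int (nint (of_int j * \<beta>))"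
      have "j \<noteq> 0" using that by simp
      hence "\<beta> = of_int (nint (of_int j * \<beta>)) / of_int j" using eq by (simp add: field_simps)
      hence "\<beta> \<in> \<rat>" by (metis Rats_divide Rats_of_int)
      thus False using assms by simp
    qed
    thus ?thesis by (simp add: g_def)
  qed
  have "\<eta> > 0" unfolding \<eta>_def using fin gpos by (subst Min_gr_iff) auto
  moreover have "\<eta> \<le> \<bar>of_int j * \<beta> - of_int m\<bar>" if "1 \<le> j" "j < Q" for j m
  proof -
    have "\<eta> \<le> g j" unfolding \<eta>_def using fin that by (intro Min_le) auto
    also have "g j \<le> \<bar>of_int j * \<beta> - of_int m\<bar>" unfolding g_def by (rule nint_nearest)
    finally show ?thesis .
  qed
  ultimately show ?thesis by blast
qed

lemma card_separated_le:
  fixes S :: "int set" and Q :: int and N :: nat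
  assumes "Q > 0" "S \<subseteq> {- int N..int N}" "\<And>a b. a \<in> S \<Longrightarrow> b \<in> S \<Longrightarrow> a < b \<Longrightarrow> b - a \<ge> Q"
  shows "real (card S) \<le> 2 * real N / of_int Q + 1"
proof -
  define g where "g d = (d + int N) div Q" for d
  have inj: "inj_on g S"
  proof (rule inj_onI, rule ccontr)
    fix a b assume ab: "a \<in> S" "b \<in> S" "g a = g b" "a \<noteq> b"
    have key: "\<bar>b - a\<bar> < Q"
    proof -
      have "a + int N = Q * g a + (a + int N) mod Q" "b + int N = Q * g b + (b + int N) mod Q"
        unfolding g_def by simp_all
      moreover have "0 \<le> (a + int N) mod Q" "(a + int N) mod Q < Q" "0 \<le> (b + int N) mod Q" "(b + int N) mod Q < Q"
        using assms(1) by simp_all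
      moreover have "Q * g a = Q * g b" using ab(3) by simp
      ultimately show ?thesis by linarith
    qed
    show False
    proof (cases "a < b")
      case True thus False using assms(3)[OF ab(1,2) True] key by linarith
    next
      case False hence "b < a" using ab(4) by simp
      thus False using assms(3)[OF ab(2,1)] key by linarith
    qed
  qed
  have img: "g ` S \<subseteq> {0..(2 * int N) div Q}"
  proof
    fix x assume "x \<in> g ` S"
    then obtain d where d: "d \<in> S" "x = g d" by auto
    have "0 \<le> d + int N" "d + int N \<le> 2 * int N" using d assms(2) by auto
    hence "0 \<le> (d + int N) div Q" "(d + int N) div Q \<le> (2 * int N) div Q"
      using assms(1) by (simp_all add: zdiv_mono1 pos_imp_zdiv_nonneg_iff)
    thus "x \<in> {0..(2 * int N) div Q}" using d by (simp add: g_def)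
  qed
  have "card S = card (g ` S)" using card_image[OF inj] by simp
  also have "\<dots> \<le> card {0..(2 * int N) div Q}" by (intro card_mono img) simp
  also have "\<dots> = nat ((2 * int N) div Q + 1)" by simp
  finally have c: "real (card S) \<le> real (nat ((2 * int N) div Q + 1))" by simp
  have "real_of_int ((2 * int N) div Q) \<le> real_of_int (2 * int N) / of_int Q"
    by (rule real_of_int_div4)
  moreover have "(2 * int N) div Q \<ge> 0" using assms(1) by (simp add: pos_imp_zdiv_nonneg_iff)
  moreover have "real_of_int (2 * int N) = 2 * real N" by simp
  ultimately have "real (nat ((2 * int N) div Q + 1)) \<le> 2 * real N / of_int Q + 1" by simp
  thus ?thesis using c by linarith
qed

text \<open>Two exceptional differences differ by some \<open>d'\<close> with \<open>d' \<beta>\<close> within \<open>2 \<delta>\<close> of an integer; for small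
  \<open>\<delta>\<close> irrationality forces \<open>|d'| \<ge> Q\<close>, so exceptional differences are \<open>Q\<close>-separated.\<close>
lemma near_half_density:
  fixes \<beta> \<epsilon> :: real
  assumes "\<beta> \<notin> \<rat>" "\<epsilon> > 0"
  shows "\<exists>\<delta>>0. \<forall>N. near_half_count \<beta> \<delta> N \<le> \<epsilon> * real N + 1"
proof -
  define Q :: int where "Q = \<lceil>2 / \<epsilon>\<rceil> + 1"
  have "2 / \<epsilon> > 0" using assms(2) by simp
  hence "\<lceil>2 / \<epsilon>\<rceil> \<ge> 0" by (simp only: zero_le_ceiling)
  hence Q0: "Q > 0" unfolding Q_def by simp
  have Qe: "2 / of_int Q \<le> \<epsilon>"
  proof -
    have "2 / \<epsilon> \<le> of_int Q" unfolding Q_def by linarith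
    hence "2 \<le> \<epsilon> * of_int Q" using assms(2) by (simp add: field_simps)
    thus ?thesis using Q0 by (simp add: field_simps)
  qed
  obtain \<eta> where \<eta>: "\<eta> > 0" "\<And>j m. 1 \<le> j \<Longrightarrow> j < Q \<Longrightarrow> \<eta> \<le> \<bar>of_int j * \<beta> - of_int m\<bar>"
    using irrational_multiples_separated[OF assms(1), of Q] by blast
  define \<delta> where "\<delta> = \<eta> / 2"
  have d0: "\<delta> > 0" using \<eta> by (simp add: \<delta>_def)
  have "near_half_count \<beta> \<delta> N \<le> \<epsilon> * real N + 1" for N
  proof -
    have "near_half_count \<beta> \<delta> N \<le> 2 * real N / of_int Q + 1"
      unfolding near_half_count_def
    proof (rule card_separated_le[OF Q0])
      fix a b assume ab: "a \<in> {d\<in>{- int N..int N}. near_half \<beta> \<delta> d}" "b \<in> {d\<in>{- int N..int N}. near_half \<beta> \<delta> d}" "a < b"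
      show "b - a \<ge> Q"
      proof (rule ccontr)
        assume "\<not> b - a \<ge> Q"
        hence j: "1 \<le> b - a" "b - a < Q" using ab(3) by auto
        obtain m where "\<bar>of_int (b - a) * \<beta> - of_int m\<bar> < 2 * \<delta>" using near_half_pair[of \<beta> \<delta> a b] ab by auto
        moreover have "\<eta> \<le> \<bar>of_int (b - a) * \<beta> - of_int m\<bar>" by (rule \<eta>(2)[OF j])
        ultimately show False by (simp add: \<delta>_def)
      qed
    qed auto
    also have "2 * real N / of_int Q = real N * (2 / of_int Q)" by simp
    also have "\<dots> \<le> real N * \<epsilon>" by (intro mult_left_mono Qe) simp
    finally show ?thesis by (simp add: mult.commute)
  qed
  thus ?thesis using d0 by blast
qed

section \<open>The triple count\<close>

text \<open>With \<open>y = x + d\<close>, \<open>box (offset \<beta> x y z) = 1\<close> exactly when \<open>z = [x + \<beta> d]\<close>.\<close>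
abbreviation offset :: "real \<Rightarrow> int \<Rightarrow> int \<Rightarrow> int \<Rightarrow> real" where
  "offset \<beta> x y z \<equiv> of_int x + \<beta> * (of_int y - of_int x) - of_int z"

definition triple_sum :: "real \<Rightarrow> nat \<Rightarrow> (int \<Rightarrow> real) \<Rightarrow> (int \<Rightarrow> real) \<Rightarrow> (int \<Rightarrow> real) \<Rightarrow> real" where
  "triple_sum \<beta> N g1 g2 g3 = (\<Sum>x\<in>{1..int N}. \<Sum>y\<in>{1..int N}. \<Sum>z\<in>{1..int N}.
      g1 x * g2 y * g3 z * box (offset \<beta> x y z))"

lemma sum_indicator_box:
  assumes "S \<subseteq> {1..int N}"
  shows "(\<Sum>z\<in>{1..int N}. indicator S z * box (t - of_int z)) = (indicator S (nint t) :: real)"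
proof -
  have "(\<Sum>z\<in>{1..int N}. indicator S z * box (t - of_int z)) = (\<Sum>z\<in>{1..int N}. if z = nint t then indicator S z else 0)"
    by (intro sum.cong refl) (simp add: box_diff_of_int)
  also have "\<dots> = (if nint t \<in> {1..int N} then indicator S (nint t) else 0)"
    by (simp add: sum.delta')
  also have "\<dots> = indicator S (nint t)" using assms by (auto simp: indicator_def)
  finally show ?thesis .
qed

lemma trip_eq_triple_sum:
  assumes S: "S \<subseteq> {1..int N}"
  shows "trip S \<beta> = triple_sum \<beta> N (indicator S) (indicator S) (indicator S)"
proof -
  let ?B = "{1..int N}"
  define g where "g = (\<lambda>(x, y). indicator S x * indicator S y * indicator S (nint (of_int x + \<beta> * (of_int y - of_int x))) :: real)"
  have bij: "bij_betw (\<lambda>(x, d). (x, x + d)) UNIV (UNIV :: (int \<times> int) set)"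
    by (rule bij_betwI[where g = "\<lambda>(x, y). (x, y - x)"]) auto
  have "trip S \<beta> = infsum (\<lambda>p. g ((\<lambda>(x, d). (x, x + d)) p)) UNIV"
    unfolding trip_def g_def by (intro infsum_cong) auto
  also have "\<dots> = infsum g UNIV" by (rule infsum_reindex_bij_betw[OF bij])
  also have "\<dots> = infsum g (?B \<times> ?B)"
    by (rule infsum_cong_neutral) (use S in \<open>auto simp: g_def indicator_def\<close>)
  also have "\<dots> = (\<Sum>x\<in>?B. \<Sum>y\<in>?B. g (x, y))" by (simp add: sum.cartesian_product)
  also have "\<dots> = (\<Sum>x\<in>?B. \<Sum>y\<in>?B. indicator S x * indicator S y *
      (\<Sum>z\<in>?B. indicator S z * box (of_int x + \<beta> * (of_int y - of_int x) - of_int z)))"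
    by (simp add: g_def sum_indicator_box[OF S])
  also have "\<dots> = triple_sum \<beta> N (indicator S) (indicator S) (indicator S)"
    unfolding triple_sum_def by (simp only: sum_distrib_left mult.assoc)
  finally show ?thesis .
qed

definition fourier_bias :: "(nat \<Rightarrow> int set) \<Rightarrow> nat \<Rightarrow> real" where
  "fourier_bias A N = (SUP \<theta>\<in>{0..1::real}. norm ((1 / of_nat N) * fourier_sum (balanced (A N) N) N \<theta>))"

lemma fourier_uniform_iff_bias: "fourier_uniform A \<longleftrightarrow> fourier_bias A \<longlonglongrightarrow> 0"
  unfolding fourier_uniform_def fourier_bias_def[abs_def] fourier_sum_def ..

lemma norm_fourier_sum_balanced_le:
  assumes "N > 0"
  shows "cmod (fourier_sum (balanced (A N) N) N \<theta>) \<le> real N * fourier_bias A N"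
proof -
  let ?F = "\<lambda>\<theta>. norm ((1 / of_nat N) * fourier_sum (balanced (A N) N) N \<theta>)"
  have "?F (frac \<theta>) \<le> fourier_bias A N"
    unfolding fourier_bias_def
  proof (rule cSUP_upper)
    show "frac \<theta> \<in> {0..1}" by (simp add: frac_lt_1 less_imp_le)
    show "bdd_above (?F ` {0..1})"
      by (rule bdd_aboveI2[where M = "(\<Sum>n\<in>{1..int N}. \<bar>balanced (A N) N n\<bar>) / real N"])
         (simp add: norm_mult norm_divide divide_right_mono norm_fourier_sum_le)
  qed
  thus ?thesis using assms by (simp add: fourier_sum_frac norm_mult norm_divide field_simps)
qed

definition fejer_period :: "real \<Rightarrow> nat \<Rightarrow> nat" where
  "fejer_period \<beta> N = 2 * (nat \<lceil>\<bar>\<beta>\<bar>\<rceil> + 3) * N + 8"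

lemma fejer_period_pos: "fejer_period \<beta> N > 0"
  by (simp add: fejer_period_def)

lemma fejer_period_ge: "real (fejer_period \<beta> N) \<ge> 2 * ((\<bar>\<beta>\<bar> + 3) * real N) + 8"
proof -
  have "\<bar>\<beta>\<bar> \<le> real (nat \<lceil>\<bar>\<beta>\<bar>\<rceil>)" by linarith
  hence h: "(\<bar>\<beta>\<bar> + 3) * real N \<le> (real (nat \<lceil>\<bar>\<beta>\<bar>\<rceil>) + 3) * real N" by (intro mult_right_mono) auto
  have e: "real (fejer_period \<beta> N) = 2 * ((real (nat \<lceil>\<bar>\<beta>\<bar>\<rceil>) + 3) * real N) + 8"
    unfolding fejer_period_def by (simp only: of_nat_add of_nat_mult of_nat_numeral mult.assoc)
  show ?thesis unfolding e using h by linarith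
qed

lemma card_near_half_shift_le:
  assumes "x \<in> {1..int N}"
  shows "real (card {y\<in>{1..int N}. near_half \<beta> \<delta> (y - x)}) \<le> near_half_count \<beta> \<delta> N"
proof -
  have "card {y\<in>{1..int N}. near_half \<beta> \<delta> (y - x)} = card ((\<lambda>y. y - x) ` {y\<in>{1..int N}. near_half \<beta> \<delta> (y - x)})"
    by (rule card_image[symmetric]) (auto simp: inj_on_def)
  also have "\<dots> \<le> card {d\<in>{- int N..int N}. near_half \<beta> \<delta> d}"
    by (rule card_mono) (use assms in \<open>auto intro: finite_subset[of _ "{- int N..int N}"]\<close>)
  finally show ?thesis by (simp add: near_half_count_def)
qed

text \<open>\<open>fejer_period\<close> is chosen so that every \<open>x + \<beta> (y - x)\<close>, \<open>x, y \<in> [N]\<close>, lies well inside one period.\<close>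
lemma box_smoothing_error_row:
  assumes x: "x \<in> {1..int N}" and y: "y \<in> {1..int N}" and "P > 0" "\<delta> > 0" "1 / real P \<le> \<delta>"
  shows "(\<Sum>z\<in>{1..int N}. \<bar>box (offset \<beta> x y z) - smooth_box (fejer_period \<beta> N) P (offset \<beta> x y z)\<bar>)
    \<le> 32 / (real P * \<delta>) + (if near_half \<beta> \<delta> (y - x) then 20 else 0)"
proof -
  let ?L = "fejer_period \<beta> N"
  define t where "t = of_int x + \<beta> * (of_int y - of_int x)"
  note L0 = fejer_period_pos[of \<beta> N]
  have nt: "nint t = x + nint (\<beta> * of_int (y - x))" unfolding t_def by (simp add: nint_add_int[symmetric])
  hence rt: "t - of_int (nint t) = \<beta> * of_int (y - x) - of_int (nint (\<beta> * of_int (y - x)))"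
    by (simp add: t_def)
  have LB: "\<bar>of_int (nint t)\<bar> + real N + 1 \<le> real ?L / 2"
  proof -
    have xb: "\<bar>of_int x\<bar> \<le> real N" "\<bar>of_int y - of_int x\<bar> \<le> real N" using x y by auto
    have "\<bar>\<beta> * (of_int y - of_int x)\<bar> \<le> \<bar>\<beta>\<bar> * real N" using xb by (simp add: abs_mult mult_left_mono)
    hence "\<bar>of_int (nint t)\<bar> \<le> real N + \<bar>\<beta>\<bar> * real N + 1/2"
      using xb nint_bounds[of t] unfolding t_def by linarith
    thus ?thesis using fejer_period_ge[of \<beta> N] by (simp add: algebra_simps)
  qed
  show ?thesis
  proof (cases "near_half \<beta> \<delta> (y - x)")
    case True
    have "0 \<le> 32 / (real P * \<delta>)" using assms by simp
    moreover have "(\<Sum>z\<in>{1..int N}. \<bar>box (offset \<beta> x y z) - smooth_box ?L P (offset \<beta> x y z)\<bar>) \<le> 20"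
      using box_smoothing_error_le[OF L0 \<open>P > 0\<close> LB] by (simp add: t_def)
    ultimately show ?thesis unfolding if_P[OF True] by linarith
  next
    case False
    hence "\<bar>t - of_int (nint t)\<bar> \<le> 1/2 - \<delta>"
      unfolding rt by (rule not_near_half_imp_dist_nint)
    thus ?thesis using box_smoothing_error_le_far[OF L0 \<open>P > 0\<close> LB] assms False by (simp add: t_def)
  qed
qed

lemma abs_weighted_triple_sum_le:
  fixes g1 g2 g3 :: "'a \<Rightarrow> real"
  assumes "\<And>y. y \<in> B \<Longrightarrow> \<bar>g1 y\<bar> \<le> 1 \<and> \<bar>g2 y\<bar> \<le> 1 \<and> \<bar>g3 y\<bar> \<le> 1"
  shows "\<bar>\<Sum>x\<in>B. \<Sum>y\<in>B. \<Sum>z\<in>B. g1 x * g2 y * g3 z * h x y z\<bar> \<le> (\<Sum>x\<in>B. \<Sum>y\<in>B. \<Sum>z\<in>B. \<bar>h x y z\<bar>)"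
proof -
  have "\<bar>\<Sum>x\<in>B. \<Sum>y\<in>B. \<Sum>z\<in>B. g1 x * g2 y * g3 z * h x y z\<bar>
      \<le> (\<Sum>x\<in>B. \<Sum>y\<in>B. \<Sum>z\<in>B. \<bar>g1 x * g2 y * g3 z * h x y z\<bar>)"
    by (rule order_trans[OF sum_abs], rule sum_mono, rule order_trans[OF sum_abs], rule sum_mono, rule sum_abs)
  also have "\<dots> \<le> (\<Sum>x\<in>B. \<Sum>y\<in>B. \<Sum>z\<in>B. \<bar>h x y z\<bar>)"
  proof (intro sum_mono)
    fix x y z assume "x \<in> B" "y \<in> B" "z \<in> B"
    hence "\<bar>g1 x * g2 y * g3 z\<bar> \<le> 1" using assms by (simp add: abs_mult mult_le_one)
    thus "\<bar>g1 x * g2 y * g3 z * h x y z\<bar> \<le> \<bar>h x y z\<bar>"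
      unfolding abs_mult[of "g1 x * g2 y * g3 z"] by (intro mult_left_le_one_le) auto
  qed
  finally show ?thesis .
qed

lemma smoothing_error_le:
  fixes g1 g2 g3 :: "int \<Rightarrow> real" and \<beta> \<delta> :: real
  assumes "P > 0" "\<delta> > 0" "1 / real P \<le> \<delta>"
    and "\<And>y. y \<in> {1..int N} \<Longrightarrow> \<bar>g1 y\<bar> \<le> 1 \<and> \<bar>g2 y\<bar> \<le> 1 \<and> \<bar>g3 y\<bar> \<le> 1"
  shows "\<bar>\<Sum>x\<in>{1..int N}. \<Sum>y\<in>{1..int N}. \<Sum>z\<in>{1..int N}.
           g1 x * g2 y * g3 z * (box (offset \<beta> x y z) - smooth_box (fejer_period \<beta> N) P (offset \<beta> x y z))\<bar>
         \<le> (real N)^2 * (32 / (real P * \<delta>)) + 20 * real N * near_half_count \<beta> \<delta> N"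
proof -
  let ?B = "{1..int N}" and ?L = "fejer_period \<beta> N"
  have row: "(\<Sum>y\<in>?B. if near_half \<beta> \<delta> (y - x) then 20 else 0) \<le> 20 * near_half_count \<beta> \<delta> N"
    if "x \<in> ?B" for x
    using card_near_half_shift_le[OF that] by (simp add: sum.If_cases Int_def conj_commute)
  have "\<bar>\<Sum>x\<in>?B. \<Sum>y\<in>?B. \<Sum>z\<in>?B. g1 x * g2 y * g3 z * (box (offset \<beta> x y z) - smooth_box ?L P (offset \<beta> x y z))\<bar>
      \<le> (\<Sum>x\<in>?B. \<Sum>y\<in>?B. \<Sum>z\<in>?B. \<bar>box (offset \<beta> x y z) - smooth_box ?L P (offset \<beta> x y z)\<bar>)"
    by (rule abs_weighted_triple_sum_le[OF assms(4)])
  also have "\<dots> \<le> (\<Sum>x\<in>?B. \<Sum>y\<in>?B. 32 / (real P * \<delta>) + (if near_half \<beta> \<delta> (y - x) then 20 else 0))"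
    by (intro sum_mono box_smoothing_error_row assms(1-3))
  also have "\<dots> \<le> (\<Sum>x\<in>?B. real N * (32 / (real P * \<delta>)) + 20 * near_half_count \<beta> \<delta> N)"
    by (intro sum_mono) (simp add: sum.distrib row)
  also have "\<dots> = (real N)^2 * (32 / (real P * \<delta>)) + 20 * real N * near_half_count \<beta> \<delta> N"
    by (simp add: power2_eq_square algebra_simps)
  finally show ?thesis .
qed

lemma smooth_triple_sum_le:
  fixes f1 f2 f3 :: "int \<Rightarrow> real" and l1 l2 l3 U C :: real
  assumes L0: "L > 0" and P0: "P > 0" and U: "\<And>\<theta>. cmod (fourier_sum f1 N \<theta>) \<le> U"
    and S2: "fejer_energy L P N f2 l2 \<le> real N * C" and S3: "fejer_energy L P N f3 l3 \<le> real N * C"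
  shows "\<bar>\<Sum>x\<in>{1..int N}. \<Sum>y\<in>{1..int N}. \<Sum>z\<in>{1..int N}.
            f1 x * f2 y * f3 z * smooth_box L P (l1 * of_int x + l2 * of_int y + l3 * of_int z)\<bar>
         \<le> 3 * U * real N * C"
proof -
  let ?B = "{1..int N}" and ?J = "central_block P"
  define M where "M j = (\<Sum>x\<in>?B. \<Sum>y\<in>?B. \<Sum>z\<in>?B.
    f1 x * f2 y * f3 z * fejer L P (l1 * of_int x + l2 * of_int y + l3 * of_int z - of_int j / real P))" for j
  have U0: "U \<ge> 0" using U[of 0] norm_ge_zero order_trans by blast
  have NC: "real N * C \<ge> 0" using fejer_energy_nonneg[OF L0 P0, of N f2 l2] S2 by linarith
  have M: "\<bar>M j\<bar> \<le> U * (real N * C)" for j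
  proof -
    have "\<bar>M j\<bar> \<le> U / 2 * (fejer_energy L P N f2 l2 + fejer_energy L P N f3 l3)"
      unfolding M_def by (rule fejer_triple_sum_le[OF L0 P0 U])
    also have "\<dots> \<le> U / 2 * (real N * C + real N * C)" using S2 S3 U0 by (intro mult_left_mono add_mono) auto
    finally show ?thesis by (simp add: mult.commute)
  qed
  have "(\<Sum>x\<in>?B. \<Sum>y\<in>?B. \<Sum>z\<in>?B. f1 x * f2 y * f3 z * smooth_box L P (l1 * of_int x + l2 * of_int y + l3 * of_int z))
      = (1 / real P) * (\<Sum>j\<in>?J. M j)"
    unfolding smooth_box_def M_def sum_distrib_left sum_swap_3_1[where J = ?J] by (simp add: mult_ac)
  also have "\<bar>\<dots>\<bar> \<le> (1 / real P) * (\<Sum>j\<in>?J. U * (real N * C))"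
    unfolding abs_mult using M by (intro mult_mono order_trans[OF sum_abs] sum_mono) auto
  also have "\<dots> = (real (card ?J) / real P) * (U * (real N * C))" by simp
  also have "\<dots> \<le> 3 * (U * (real N * C))"
  proof (rule mult_right_mono)
    have "real (card ?J) \<le> 3 * real P" using card_central_block_le[of P] P0 by linarith
    thus "real (card ?J) / real P \<le> 3" using P0 by (simp add: divide_le_eq)
  qed (use U0 NC in simp)
  finally show ?thesis by (simp add: mult_ac)
qed

definition energy_bound :: "real \<Rightarrow> nat \<Rightarrow> real" where
  "energy_bound \<beta> P = energy_const (1 - \<beta>) P + energy_const \<beta> P + energy_const (-1) P"

lemma energy_const_nonneg: "P > 0 \<Longrightarrow> energy_const q P \<ge> 0"
  unfolding energy_const_def by (intro add_nonneg_nonneg mult_nonneg_nonneg divide_nonneg_nonneg) auto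

lemma fejer_energy_le_energy_bound:
  fixes \<beta> :: real and f :: "int \<Rightarrow> real"
  assumes P0: "P > 0" and \<beta>: "\<beta> \<noteq> 0" "\<beta> \<noteq> 1" and f: "\<And>y. y \<in> {1..int N} \<Longrightarrow> \<bar>f y\<bar> \<le> 1"
  shows "fejer_energy (fejer_period \<beta> N) P N f (1 - \<beta>) \<le> real N * energy_bound \<beta> P"
    "fejer_energy (fejer_period \<beta> N) P N f \<beta> \<le> real N * energy_bound \<beta> P"
    "fejer_energy (fejer_period \<beta> N) P N f (-1) \<le> real N * energy_bound \<beta> P"
proof -
  let ?L = "fejer_period \<beta> N"
  note L0 = fejer_period_pos[of \<beta> N]
  have L: "\<bar>q\<bar> * real N \<le> real ?L / 2" if "\<bar>q\<bar> \<le> \<bar>\<beta>\<bar> + 3" for q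
  proof -
    have "\<bar>q\<bar> * real N \<le> (\<bar>\<beta>\<bar> + 3) * real N" using that by (intro mult_right_mono) auto
    thus ?thesis using fejer_period_ge[of \<beta> N] by linarith
  qed
  have LL: "\<bar>1 - \<beta>\<bar> * real N \<le> real ?L / 2" "\<bar>\<beta>\<bar> * real N \<le> real ?L / 2" "\<bar>-1\<bar> * real N \<le> real ?L / 2"
    by (rule L; auto simp: abs_if)+
  have C: "real N * energy_const q P \<le> real N * energy_bound \<beta> P" if "q \<in> {1 - \<beta>, \<beta>, -1}" for q
    using that energy_const_nonneg[OF P0] by (intro mult_left_mono) (auto simp: energy_bound_def)
  show "fejer_energy ?L P N f (1 - \<beta>) \<le> real N * energy_bound \<beta> P"
    using fejer_energy_le[OF L0 P0 _ LL(1) f] C \<beta> by fastforce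
  show "fejer_energy ?L P N f \<beta> \<le> real N * energy_bound \<beta> P"
    using fejer_energy_le[OF L0 P0 _ LL(2) f] C \<beta> by fastforce
  show "fejer_energy ?L P N f (-1) \<le> real N * energy_bound \<beta> P"
    using fejer_energy_le[OF L0 P0 _ LL(3) f] C by fastforce
qed

lemma triple_sum_le:
  fixes g1 g2 g3 :: "int \<Rightarrow> real" and \<beta> \<delta> M :: real
  assumes "P > 0" "\<delta> > 0" "1 / real P \<le> \<delta>"
    and "\<And>y. y \<in> {1..int N} \<Longrightarrow> \<bar>g1 y\<bar> \<le> 1 \<and> \<bar>g2 y\<bar> \<le> 1 \<and> \<bar>g3 y\<bar> \<le> 1"
    and "\<bar>\<Sum>x\<in>{1..int N}. \<Sum>y\<in>{1..int N}. \<Sum>z\<in>{1..int N}.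
           g1 x * g2 y * g3 z * smooth_box (fejer_period \<beta> N) P (offset \<beta> x y z)\<bar> \<le> M"
  shows "\<bar>triple_sum \<beta> N g1 g2 g3\<bar> \<le> (real N)^2 * (32 / (real P * \<delta>)) + 20 * real N * near_half_count \<beta> \<delta> N + M"
proof -
  let ?S = "\<lambda>h. \<Sum>x\<in>{1..int N}. \<Sum>y\<in>{1..int N}. \<Sum>z\<in>{1..int N}. g1 x * g2 y * g3 z * h x y z"
  have "triple_sum \<beta> N g1 g2 g3
      = ?S (\<lambda>x y z. smooth_box (fejer_period \<beta> N) P (offset \<beta> x y z))
        + ?S (\<lambda>x y z. box (offset \<beta> x y z) - smooth_box (fejer_period \<beta> N) P (offset \<beta> x y z))"
    unfolding triple_sum_def by (simp only: sum.distrib[symmetric]) (intro sum.cong refl, simp add: algebra_simps)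
  moreover have "\<bar>?S (\<lambda>x y z. box (offset \<beta> x y z) - smooth_box (fejer_period \<beta> N) P (offset \<beta> x y z))\<bar>
      \<le> (real N)^2 * (32 / (real P * \<delta>)) + 20 * real N * near_half_count \<beta> \<delta> N"
    by (rule smoothing_error_le) (use assms in auto)
  ultimately show ?thesis using assms(5) by linarith
qed

text \<open>The balanced function may sit in any of the three positions: each position has a nonzero
  coefficient in the linear form \<open>offset \<beta> x y z = (1 - \<beta>) x + \<beta> y - z\<close>.\<close>
lemma triple_sum_balanced_le:
  fixes f g h :: "int \<Rightarrow> real" and \<beta> \<delta> U :: real
  assumes P0: "P > 0" and "\<delta> > 0" "1 / real P \<le> \<delta>" and \<beta>: "\<beta> \<noteq> 0" "\<beta> \<noteq> 1"
    and fb: "\<And>y. y \<in> {1..int N} \<Longrightarrow> \<bar>f y\<bar> \<le> 1"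
    and gb: "\<And>y. y \<in> {1..int N} \<Longrightarrow> \<bar>g y\<bar> \<le> 1"
    and hb: "\<And>y. y \<in> {1..int N} \<Longrightarrow> \<bar>h y\<bar> \<le> 1"
    and U: "\<And>\<theta>. cmod (fourier_sum f N \<theta>) \<le> U"
  shows "\<bar>triple_sum \<beta> N f g h\<bar> \<le> (real N)^2 * (32 / (real P * \<delta>)) + 20 * real N * near_half_count \<beta> \<delta> N + 3 * U * real N * energy_bound \<beta> P"
    "\<bar>triple_sum \<beta> N g f h\<bar> \<le> (real N)^2 * (32 / (real P * \<delta>)) + 20 * real N * near_half_count \<beta> \<delta> N + 3 * U * real N * energy_bound \<beta> P"
    "\<bar>triple_sum \<beta> N g h f\<bar> \<le> (real N)^2 * (32 / (real P * \<delta>)) + 20 * real N * near_half_count \<beta> \<delta> N + 3 * U * real N * energy_bound \<beta> P"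
proof -
  let ?L = "fejer_period \<beta> N" and ?B = "{1..int N}"
  let ?R = "(real N)^2 * (32 / (real P * \<delta>)) + 20 * real N * near_half_count \<beta> \<delta> N + 3 * U * real N * energy_bound \<beta> P"
  note L0 = fejer_period_pos[of \<beta> N]
  note E = fejer_energy_le_energy_bound[OF P0 \<beta>]
  note main = smooth_triple_sum_le[OF L0 P0 U]
  note le = triple_sum_le[OF P0 assms(2,3)]
  show "\<bar>triple_sum \<beta> N f g h\<bar> \<le> ?R"
  proof (rule le)
    have "(\<Sum>x\<in>?B. \<Sum>y\<in>?B. \<Sum>z\<in>?B. f x * g y * h z * smooth_box ?L P (offset \<beta> x y z))
       = (\<Sum>x\<in>?B. \<Sum>y\<in>?B. \<Sum>z\<in>?B. f x * g y * h z * smooth_box ?L P ((1 - \<beta>) * of_int x + \<beta> * of_int y + (-1) * of_int z))"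
      by (simp add: algebra_simps)
    also have "\<bar>\<dots>\<bar> \<le> 3 * U * real N * energy_bound \<beta> P" by (rule main[OF E(2)[OF gb] E(3)[OF hb]])
    finally show "\<bar>\<Sum>x\<in>?B. \<Sum>y\<in>?B. \<Sum>z\<in>?B. f x * g y * h z * smooth_box ?L P (offset \<beta> x y z)\<bar> \<le> 3 * U * real N * energy_bound \<beta> P" .
  qed (use fb gb hb in blast)
  show "\<bar>triple_sum \<beta> N g f h\<bar> \<le> ?R"
  proof (rule le)
    have "(\<Sum>x\<in>?B. \<Sum>y\<in>?B. \<Sum>z\<in>?B. g x * f y * h z * smooth_box ?L P (offset \<beta> x y z))
       = (\<Sum>y\<in>?B. \<Sum>x\<in>?B. \<Sum>z\<in>?B. f y * g x * h z * smooth_box ?L P (\<beta> * of_int y + (1 - \<beta>) * of_int x + (-1) * of_int z))"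
      by (subst sum.swap) (simp add: algebra_simps)
    also have "\<bar>\<dots>\<bar> \<le> 3 * U * real N * energy_bound \<beta> P" by (rule main[OF E(1)[OF gb] E(3)[OF hb]])
    finally show "\<bar>\<Sum>x\<in>?B. \<Sum>y\<in>?B. \<Sum>z\<in>?B. g x * f y * h z * smooth_box ?L P (offset \<beta> x y z)\<bar> \<le> 3 * U * real N * energy_bound \<beta> P" .
  qed (use fb gb hb in blast)
  show "\<bar>triple_sum \<beta> N g h f\<bar> \<le> ?R"
  proof (rule le)
    have "(\<Sum>x\<in>?B. \<Sum>y\<in>?B. \<Sum>z\<in>?B. g x * h y * f z * smooth_box ?L P (offset \<beta> x y z))
       = (\<Sum>z\<in>?B. \<Sum>x\<in>?B. \<Sum>y\<in>?B. f z * g x * h y * smooth_box ?L P ((-1) * of_int z + (1 - \<beta>) * of_int x + \<beta> * of_int y))"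
      by (subst sum.swap, subst (2) sum.swap) (simp add: algebra_simps)
    also have "\<bar>\<dots>\<bar> \<le> 3 * U * real N * energy_bound \<beta> P" by (rule main[OF E(1)[OF gb] E(2)[OF hb]])
    finally show "\<bar>\<Sum>x\<in>?B. \<Sum>y\<in>?B. \<Sum>z\<in>?B. g x * h y * f z * smooth_box ?L P (offset \<beta> x y z)\<bar> \<le> 3 * U * real N * energy_bound \<beta> P" .
  qed (use fb gb hb in blast)
qed

lemma triple_sum_telescope:
  fixes a u :: "int \<Rightarrow> real" and \<alpha> :: real
  shows "triple_sum \<beta> N (\<lambda>n. a n - \<alpha> * u n) a a + \<alpha> * triple_sum \<beta> N u (\<lambda>n. a n - \<alpha> * u n) a
     + \<alpha>^2 * triple_sum \<beta> N u u (\<lambda>n. a n - \<alpha> * u n) = triple_sum \<beta> N a a a - \<alpha>^3 * triple_sum \<beta> N u u u"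
  unfolding triple_sum_def
  by (simp only: sum_distrib_left sum.distrib[symmetric] sum_subtractf[symmetric])
     (intro sum.cong refl, simp add: algebra_simps power2_eq_square power3_eq_cube)

lemma dens_le_1:
  assumes "S \<subseteq> {1..int N}"
  shows "dens S N \<le> 1"
proof -
  have "card S \<le> card {1..int N}" by (intro card_mono assms) simp
  thus ?thesis by (simp add: dens_def divide_le_eq)
qed

lemma abs_balanced_le_1:
  assumes "S \<subseteq> {1..int N}"
  shows "\<bar>balanced S N n\<bar> \<le> 1"
  using dens_le_1[OF assms] by (simp add: balanced_def dens_def indicator_def)

lemma abs_add_scaled_le:
  fixes X Y Z \<alpha> :: real
  assumes "\<alpha> \<ge> 0"
  shows "\<bar>X + \<alpha> * Y + \<alpha>^2 * Z\<bar> \<le> \<bar>X\<bar> + \<alpha> * \<bar>Y\<bar> + \<alpha>^2 * \<bar>Z\<bar>"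
proof -
  have "\<bar>X + \<alpha> * Y + \<alpha>^2 * Z\<bar> \<le> \<bar>X + \<alpha> * Y\<bar> + \<bar>\<alpha>^2 * Z\<bar>" by (rule abs_triangle_ineq)
  also have "\<bar>X + \<alpha> * Y\<bar> \<le> \<bar>X\<bar> + \<bar>\<alpha> * Y\<bar>" by (rule abs_triangle_ineq)
  finally show ?thesis using assms by (simp add: abs_mult)
qed

definition deviation_bound :: "real \<Rightarrow> (nat \<Rightarrow> int set) \<Rightarrow> real \<Rightarrow> nat \<Rightarrow> nat \<Rightarrow> real" where
  "deviation_bound \<beta> A \<delta> P N = 3 * (32 / (real P * \<delta>) + 20 * near_half_count \<beta> \<delta> N / real N + 3 * fourier_bias A N * energy_bound \<beta> P)"

lemma trip_deviation_le:
  fixes A :: "nat \<Rightarrow> int set" and \<beta> \<delta> :: real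
  assumes \<beta>: "\<beta> \<noteq> 0" "\<beta> \<noteq> 1" and AN: "A N \<subseteq> {1..int N}" and N0: "N > 0"
    and P0: "P > 0" and d0: "\<delta> > 0" and dP: "1 / real P \<le> \<delta>"
  shows "\<bar>trip (A N) \<beta> / (real N)^2 - (dens (A N) N)^3 * trip {1..int N} \<beta> / (real N)^2\<bar>
     \<le> deviation_bound \<beta> A \<delta> P N"
proof -
  let ?B = "{1..int N}"
  define \<alpha> where "\<alpha> = dens (A N) N"
  define a where "a = (indicator (A N) :: int \<Rightarrow> real)"
  define u where "u = (indicator ?B :: int \<Rightarrow> real)"
  define f where "f = balanced (A N) N"
  define Bd where "Bd = (real N)^2 * (32 / (real P * \<delta>)) + 20 * real N * near_half_count \<beta> \<delta> N
    + 3 * (real N * fourier_bias A N) * real N * energy_bound \<beta> P"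
  have f_eq: "f = (\<lambda>n. a n - \<alpha> * u n)" unfolding f_def a_def u_def \<alpha>_def balanced_def by auto
  have \<alpha>: "0 \<le> \<alpha>" "\<alpha> \<le> 1" using dens_le_1[OF AN] by (simp_all add: \<alpha>_def dens_def)
  have a1: "\<bar>a y\<bar> \<le> 1" and u1: "\<bar>u y\<bar> \<le> 1" and f1: "\<bar>f y\<bar> \<le> 1" for y
    using abs_balanced_le_1[OF AN] by (simp_all add: a_def u_def f_def indicator_def)
  have F: "cmod (fourier_sum f N \<theta>) \<le> real N * fourier_bias A N" for \<theta>
    unfolding f_def by (rule norm_fourier_sum_balanced_le[OF N0])
  note bounds = triple_sum_balanced_le[OF P0 d0 dP \<beta> f1 _ _ F, folded Bd_def]
  have "trip (A N) \<beta> - \<alpha>^3 * trip ?B \<beta>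
      = triple_sum \<beta> N f a a + \<alpha> * triple_sum \<beta> N u f a + \<alpha>^2 * triple_sum \<beta> N u u f"
    unfolding a_def u_def f_eq trip_eq_triple_sum[OF AN] trip_eq_triple_sum[OF order_refl] triple_sum_telescope
    by simp
  also have "\<bar>\<dots>\<bar> \<le> \<bar>triple_sum \<beta> N f a a\<bar> + \<alpha> * \<bar>triple_sum \<beta> N u f a\<bar> + \<alpha>^2 * \<bar>triple_sum \<beta> N u u f\<bar>"
    using \<alpha>(1) by (rule abs_add_scaled_le)
  also have "\<dots> \<le> Bd + 1 * Bd + 1 * Bd"
    using bounds(1)[OF a1 a1] bounds(2)[OF u1 a1] bounds(3)[OF u1 u1] \<alpha> power_le_one[OF \<alpha>]
    by (intro add_mono mult_mono) auto
  finally have "\<bar>trip (A N) \<beta> - \<alpha>^3 * trip ?B \<beta>\<bar> / (real N)^2 \<le> 3 * Bd / (real N)^2"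
    by (simp add: divide_right_mono)
  moreover have "3 * Bd / (real N)^2 = deviation_bound \<beta> A \<delta> P N"
    using N0 by (simp add: Bd_def deviation_bound_def field_simps power2_eq_square)
  ultimately show ?thesis by (simp add: \<alpha>_def diff_divide_distrib[symmetric])
qed

lemma smoothing_parameters:
  assumes irr: "\<beta> \<notin> \<rat>" and bias: "fourier_bias A \<longlonglongrightarrow> 0" and \<epsilon>: "\<epsilon> > 0"
  obtains \<delta> P where "\<delta> > 0" "P > 0" "1 / real P \<le> \<delta>"
    "\<forall>\<^sub>F N in sequentially. deviation_bound \<beta> A \<delta> P N \<le> \<epsilon>"
proof -
  obtain \<delta> where \<delta>: "\<delta> > 0" and count: "\<And>N. near_half_count \<beta> \<delta> N \<le> \<epsilon> / 240 * real N + 1"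
    using near_half_density[OF irr, of "\<epsilon> / 240"] \<epsilon> by auto
  obtain P :: nat where P: "max (1 / \<delta>) (384 / (\<delta> * \<epsilon>)) < real P"
    using reals_Archimedean2 by blast
  have P0: "P > 0" using P \<delta> by (smt (verit) of_nat_0_less_iff divide_pos_pos)
  have dP: "1 / real P \<le> \<delta>" using P P0 \<delta> by (simp add: field_simps)
  have main: "96 / (real P * \<delta>) \<le> \<epsilon> / 4" using P P0 \<delta> \<epsilon> by (simp add: field_simps)
  define C where "C = energy_bound \<beta> P"
  have "(\<lambda>N. fourier_bias A N * C) \<longlonglongrightarrow> 0" using tendsto_mult_left_zero[OF bias] .
  hence "\<forall>\<^sub>F N in sequentially. fourier_bias A N * C < \<epsilon> / 36"
    using \<epsilon> by (intro order_tendstoD(2)) auto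
  moreover have "\<forall>\<^sub>F N in sequentially. 60 / real N < \<epsilon> / 4"
    using \<epsilon> by (intro order_tendstoD(2)[OF lim_const_over_n]) auto
  moreover have "\<forall>\<^sub>F N in sequentially. N > 0" by (rule eventually_gt_at_top)
  ultimately have "\<forall>\<^sub>F N in sequentially.
       3 * (32 / (real P * \<delta>) + 20 * near_half_count \<beta> \<delta> N / real N + 3 * fourier_bias A N * C) \<le> \<epsilon>"
  proof eventually_elim
    case (elim N)
    have "60 * near_half_count \<beta> \<delta> N / real N \<le> 60 * (\<epsilon> / 240 * real N + 1) / real N"
      using count[of N] by (simp add: divide_right_mono)
    also have "\<dots> = \<epsilon> / 4 + 60 / real N" using elim by (simp add: field_simps)
    finally show ?case using main elim by simp
  qed
  thus ?thesis using that \<delta> P0 dP by (simp add: C_def deviation_bound_def)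
qed

lemma LIMSEQ_zero_if_eventually_abs_le:
  fixes X :: "nat \<Rightarrow> real"
  assumes "\<And>\<epsilon>. \<epsilon> > 0 \<Longrightarrow> \<forall>\<^sub>F N in sequentially. \<bar>X N\<bar> \<le> \<epsilon>"
  shows "X \<longlonglongrightarrow> 0"
proof (rule tendstoI)
  fix \<epsilon> :: real assume "\<epsilon> > 0"
  hence "\<forall>\<^sub>F N in sequentially. \<bar>X N\<bar> \<le> \<epsilon> / 2" by (intro assms) simp
  thus "\<forall>\<^sub>F N in sequentially. dist (X N) 0 < \<epsilon>"
    by eventually_elim (use \<open>\<epsilon> > 0\<close> in simp)
qed

theorem corollary1p4:
  fixes A :: "nat \<Rightarrow> int set" and \<beta> :: real
  assumes "\<beta> \<notin> \<rat>"
    and "\<And>N. A N \<subseteq> {1..int N}"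
    and "fourier_uniform A"
  shows "(\<lambda>N. trip (A N) \<beta> / (real N)^2
              - (dens (A N) N)^3 * trip {1..int N} \<beta> / (real N)^2) \<longlonglongrightarrow> 0"
proof (rule LIMSEQ_zero_if_eventually_abs_le)
  fix \<epsilon> :: real assume "\<epsilon> > 0"
  obtain \<delta> P where "\<delta> > 0" "P > 0" "1 / real P \<le> \<delta>"
    and small: "\<forall>\<^sub>F N in sequentially. deviation_bound \<beta> A \<delta> P N \<le> \<epsilon>"
    using smoothing_parameters[OF assms(1) _ \<open>\<epsilon> > 0\<close>] assms(3) by (auto simp: fourier_uniform_iff_bias)
  have \<beta>: "\<beta> \<noteq> 0" "\<beta> \<noteq> 1" using assms(1) by auto
  show "\<forall>\<^sub>F N in sequentially. \<bar>trip (A N) \<beta> / (real N)^2 - (dens (A N) N)^3 * trip {1..int N} \<beta> / (real N)^2\<bar> \<le> \<epsilon>"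
    using small eventually_gt_at_top[of 0]
  proof eventually_elim
    case (elim N)
    thus ?case using trip_deviation_le[where A = A and N = N, OF \<beta> assms(2) _ \<open>P > 0\<close> \<open>\<delta> > 0\<close> \<open>1 / real P \<le> \<delta>\<close>]
      by linarith
  qed
qed

end
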